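(* Let $p\colon X\to Y$ be a right fibration of simplicial sets and let $y$ be a vertex of $Y$. Then the natural map $p^{-1}(y)\to P(p,y)$ is the inclusion of a deformation retract.
   Context: A right fibration is a map of simplicial sets with the right lifting property with respect to all horn inclusions $\Lambda^k[n]\to\Delta[n]$ with $n\ge1$ and $0<k\le n$. $P(Y,y)$ is the simplicial set with $P(Y,y)_n=\{z\colon\Delta[n+1]\to Y\mid z(0)=y\}$, simplicial operators induced by $\bar f\colon[m+1]\to[n+1]$, $\bar f(0)=0$, $\bar f(k)=f(k-1)+1$ for $f\colon[m]\to[n]$; it has base vertex $*$ given by the $1$-simplex constant at $y$. The map $\bar\jmath\colon P(Y,y)\to Y$ sends an $(n+1)$-simplex $z$ to its face opposite vertex $0$. The right homotopy fibre $P(p,y)$ is the pullback of $X\xrightarrow{p}Y\xleftarrow{\bar\jmath}P(Y,y)$. The fibre $p^{-1}(y)$ is the pullback of $X\xrightarrow{p}Y\xleftarrow{y}\Delta[0]$, and the map $p^{-1}(y)\to P(p,y)$ is induced by $*\colon\Delta[0]\to P(Y,y)$ (note $\bar\jmath\circ *=y$). *)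

theory Defs
  imports Main
begin

text \<open>A morphism [m] \<rightarrow> [n] of the simplex category is represented by a function
  nat \<Rightarrow> nat that is monotone on {..m} and maps {..m} into {..n}; only its values on
  {..m} matter.\<close>

definition simp_op :: "nat \<Rightarrow> nat \<Rightarrow> (nat \<Rightarrow> nat) \<Rightarrow> bool" where
  "simp_op m n f \<longleftrightarrow> (\<forall>i j. i \<le> j \<longrightarrow> j \<le> m \<longrightarrow> f i \<le> f j) \<and> (\<forall>i\<le>m. f i \<le> n)"

text \<open>A simplicial set: the set of n-simplices for each n, and the simplicial operator
  sop X m n f : X_n \<rightarrow> X_m induced by f : [m] \<rightarrow> [n].\<close>

record 'a sset =
  scar :: "nat \<Rightarrow> 'a set"
  sop  :: "nat \<Rightarrow> nat \<Rightarrow> (nat \<Rightarrow> nat) \<Rightarrow> 'a \<Rightarrow> 'a"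

definition is_sset :: "'a sset \<Rightarrow> bool" where
  "is_sset X \<longleftrightarrow>
     (\<forall>m n f x. simp_op m n f \<longrightarrow> x \<in> scar X n \<longrightarrow> sop X m n f x \<in> scar X m) \<and>
     (\<forall>n x. x \<in> scar X n \<longrightarrow> sop X n n id x = x) \<and>
     (\<forall>l m n g f x. simp_op l m g \<longrightarrow> simp_op m n f \<longrightarrow> x \<in> scar X n \<longrightarrow>
          sop X l m g (sop X m n f x) = sop X l n (f \<circ> g) x) \<and>
     (\<forall>m n f f' x. simp_op m n f \<longrightarrow> (\<forall>i\<le>m. f i = f' i) \<longrightarrow> x \<in> scar X n \<longrightarrow>
          sop X m n f x = sop X m n f' x)"

definition smorph :: "'a sset \<Rightarrow> 'b sset \<Rightarrow> (nat \<Rightarrow> 'a \<Rightarrow> 'b) \<Rightarrow> bool" where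
  "smorph X Y g \<longleftrightarrow>
     (\<forall>n x. x \<in> scar X n \<longrightarrow> g n x \<in> scar Y n) \<and>
     (\<forall>m n f x. simp_op m n f \<longrightarrow> x \<in> scar X n \<longrightarrow> g m (sop X m n f x) = sop Y m n f (g n x))"

text \<open>An m-simplex of \<Delta>[n] is a monotone map [m] \<rightarrow> [n], encoded as the list of its values.\<close>

definition simplex :: "nat \<Rightarrow> nat list sset" where
  "simplex n = \<lparr> scar = (\<lambda>m. {xs. length xs = Suc m \<and> sorted xs \<and> set xs \<subseteq> {..n}}),
                sop = (\<lambda>m k f xs. map (\<lambda>i. xs ! f i) [0..<Suc m]) \<rparr>"

definition horn :: "nat \<Rightarrow> nat \<Rightarrow> nat list sset" where
  "horn n k = \<lparr> scar = (\<lambda>m. {xs. xs \<in> scar (simplex n) m \<and> set xs \<union> {k} \<noteq> {..n}}),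
               sop = sop (simplex n) \<rparr>"

definition has_rlp_horn :: "nat \<Rightarrow> nat \<Rightarrow> 'a sset \<Rightarrow> 'b sset \<Rightarrow> (nat \<Rightarrow> 'a \<Rightarrow> 'b) \<Rightarrow> bool" where
  "has_rlp_horn n k X Y p \<longleftrightarrow>
     (\<forall>a b. smorph (horn n k) X a \<longrightarrow> smorph (simplex n) Y b \<longrightarrow>
        (\<forall>m s. s \<in> scar (horn n k) m \<longrightarrow> p m (a m s) = b m s) \<longrightarrow>
        (\<exists>l. smorph (simplex n) X l \<and>
             (\<forall>m s. s \<in> scar (horn n k) m \<longrightarrow> l m s = a m s) \<and>
             (\<forall>m s. s \<in> scar (simplex n) m \<longrightarrow> p m (l m s) = b m s)))"

definition right_fibration :: "'a sset \<Rightarrow> 'b sset \<Rightarrow> (nat \<Rightarrow> 'a \<Rightarrow> 'b) \<Rightarrow> bool" where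
  "right_fibration X Y p \<longleftrightarrow> smorph X Y p \<and>
     (\<forall>n k. 1 \<le> n \<longrightarrow> 0 < k \<longrightarrow> k \<le> n \<longrightarrow> has_rlp_horn n k X Y p)"

definition spullback :: "'a sset \<Rightarrow> (nat \<Rightarrow> 'a \<Rightarrow> 'c) \<Rightarrow> 'b sset \<Rightarrow> (nat \<Rightarrow> 'b \<Rightarrow> 'c) \<Rightarrow> ('a \<times> 'b) sset" where
  "spullback X p Z q = \<lparr> scar = (\<lambda>n. {(x, z). x \<in> scar X n \<and> z \<in> scar Z n \<and> p n x = q n z}),
                         sop = (\<lambda>m n f (x, z). (sop X m n f x, sop Z m n f z)) \<rparr>"

definition sprod_interval :: "'a sset \<Rightarrow> ('a \<times> nat list) sset" where
  "sprod_interval X = \<lparr> scar = (\<lambda>n. scar X n \<times> scar (simplex 1) n),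
                        sop = (\<lambda>m n f (x, t). (sop X m n f x, sop (simplex 1) m n f t)) \<rparr>"

definition vertex_map :: "'b sset \<Rightarrow> 'b \<Rightarrow> nat \<Rightarrow> nat list \<Rightarrow> 'b" where
  "vertex_map Y y = (\<lambda>n _. sop Y n 0 (\<lambda>_. 0) y)"

definition fbar :: "(nat \<Rightarrow> nat) \<Rightarrow> nat \<Rightarrow> nat" where
  "fbar f k = (if k = 0 then 0 else Suc (f (k - 1)))"

definition path_space :: "'b sset \<Rightarrow> 'b \<Rightarrow> 'b sset" where
  "path_space Y y = \<lparr> scar = (\<lambda>n. {z. z \<in> scar Y (Suc n) \<and> sop Y 0 (Suc n) (\<lambda>_. 0) z = y}),
                      sop = (\<lambda>m n f z. sop Y (Suc m) (Suc n) (fbar f) z) \<rparr>"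

text \<open>\<bar>\<jmath> : P(Y,y) \<rightarrow> Y, face opposite vertex 0.\<close>

definition jbar :: "'b sset \<Rightarrow> nat \<Rightarrow> 'b \<Rightarrow> 'b" where
  "jbar Y = (\<lambda>n z. sop Y n (Suc n) Suc z)"

text \<open>The base vertex * of P(Y,y) as a map \<Delta>[0] \<rightarrow> P(Y,y): in degree n it is the
  degenerate (n+1)-simplex of Y at y.\<close>

definition base_map :: "'b sset \<Rightarrow> 'b \<Rightarrow> nat \<Rightarrow> nat list \<Rightarrow> 'b" where
  "base_map Y y = (\<lambda>n _. sop Y (Suc n) 0 (\<lambda>_. 0) y)"

definition right_hofib :: "'a sset \<Rightarrow> 'b sset \<Rightarrow> (nat \<Rightarrow> 'a \<Rightarrow> 'b) \<Rightarrow> 'b \<Rightarrow> ('a \<times> 'b) sset" where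
  "right_hofib X Y p y = spullback X p (path_space Y y) (jbar Y)"

definition sfibre :: "'a sset \<Rightarrow> 'b sset \<Rightarrow> (nat \<Rightarrow> 'a \<Rightarrow> 'b) \<Rightarrow> 'b \<Rightarrow> ('a \<times> nat list) sset" where
  "sfibre X Y p y = spullback X p (simplex 0) (vertex_map Y y)"

definition fibre_to_hofib :: "'b sset \<Rightarrow> 'b \<Rightarrow> nat \<Rightarrow> ('a \<times> nat list) \<Rightarrow> ('a \<times> 'b)" where
  "fibre_to_hofib Y y = (\<lambda>n (x, d). (x, base_map Y y n d))"

definition deformation_retract_incl :: "'a sset \<Rightarrow> 'b sset \<Rightarrow> (nat \<Rightarrow> 'a \<Rightarrow> 'b) \<Rightarrow> bool" where
  "deformation_retract_incl A B i \<longleftrightarrow>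
     smorph A B i \<and> (\<forall>n. inj_on (i n) (scar A n)) \<and>
     (\<exists>r h. smorph B A r \<and> (\<forall>n a. a \<in> scar A n \<longrightarrow> r n (i n a) = a) \<and>
        smorph (sprod_interval B) B h \<and>
        (\<forall>n b. b \<in> scar B n \<longrightarrow> h n (b, replicate (Suc n) 0) = i n (r n b)) \<and>
        (\<forall>n b. b \<in> scar B n \<longrightarrow> h n (b, replicate (Suc n) 1) = b) \<and>
        (\<forall>n a t. a \<in> scar A n \<longrightarrow> t \<in> scar (simplex 1) n \<longrightarrow> h n (i n a, t) = i n a))"

end

(* The path space P(Y,y) contracts onto its base vertex by precomposing paths with the
   operators contract_op. Composed with jbar, this contraction is a homotopy in Y, and the
   point is to lift it through p to a homotopy on P(p,y) which ends in the identity and is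
   constant on the fibre; its other end then lands in the fibre and is the retraction.
   The lift is built by skeletal induction over the nondegenerate simplices b of P(p,y)
   (Eilenberg-Zilber): over b one has to extend a map from the prism subcomplex
   boundary(Delta[n]) x Delta[1] + Delta[n] x {1} to Delta[n] x Delta[1]. This extension
   is possible for a right fibration because the inclusion is a composite of pushouts of
   the right horns Lambda^(j+1)[n+1], one for each nondegenerate (n+1)-simplex of the
   prism. *)

theory Submission
  imports Defs
begin

declare upt_Suc[simp del]

lemma simplex_scar [simp]:
  "xs \<in> scar (simplex n) m \<longleftrightarrow> length xs = Suc m \<and> sorted xs \<and> set xs \<subseteq> {..n}"
  by (simp add: simplex_def)

lemma simplex_sop [simp]: "sop (simplex n) m k f xs = map (\<lambda>i. xs ! f i) [0..<Suc m]"
  by (simp add: simplex_def)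

lemma simp_op_mono: "simp_op m n f \<Longrightarrow> i \<le> j \<Longrightarrow> j \<le> m \<Longrightarrow> f i \<le> f j"
  by (simp add: simp_op_def)

lemma simp_op_bound: "simp_op m n f \<Longrightarrow> i \<le> m \<Longrightarrow> f i \<le> n"
  by (simp add: simp_op_def)

lemma simp_op_comp: "simp_op l m g \<Longrightarrow> simp_op m n f \<Longrightarrow> simp_op l n (f \<circ> g)"
  unfolding simp_op_def by (auto simp: le_trans)

lemma simp_op_id: "simp_op n n id"
  by (simp add: simp_op_def)

lemma simp_op_zero: "simp_op m n (\<lambda>_. 0)"
  by (simp add: simp_op_def)

lemma simp_op_Suc: "simp_op m (Suc m) Suc"
  by (simp add: simp_op_def)

lemma simp_op_nth: "xs \<in> scar (simplex n) m \<Longrightarrow> simp_op m n (nth xs)"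
  unfolding simp_op_def
  by (auto simp: sorted_nth_mono less_Suc_eq_le intro!: subsetD[of "set xs" "{..n}", simplified])

lemma nth_simplex_bound: "xs \<in> scar (simplex n) m \<Longrightarrow> i \<le> m \<Longrightarrow> xs ! i \<le> n"
  using simp_op_bound simp_op_nth by blast

lemma set_simplex_sop_subset:
  "simp_op m n f \<Longrightarrow> length u = Suc n \<Longrightarrow> set (map (\<lambda>i. u ! f i) [0..<Suc m]) \<subseteq> set u"
  using simp_op_bound[of m n f] by (auto simp: less_Suc_eq_le intro!: nth_mem)

lemma simplex_sop_closed:
  assumes f: "simp_op m k f" and xs: "xs \<in> scar (simplex n) k"
  shows "sop (simplex n) m k f xs \<in> scar (simplex n) m"
proof -
  have "sorted (map (\<lambda>i. xs ! f i) [0..<Suc m])"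
    unfolding sorted_iff_nth_mono
  proof (intro allI impI)
    fix i j assume "i \<le> j" "j < length (map (\<lambda>i. xs ! f i) [0..<Suc m])"
    then have "f i \<le> f j" "f j \<le> k" using simp_op_mono[OF f] simp_op_bound[OF f] by auto
    then show "map (\<lambda>i. xs ! f i) [0..<Suc m] ! i \<le> map (\<lambda>i. xs ! f i) [0..<Suc m] ! j"
      using \<open>i \<le> j\<close> \<open>j < _\<close> xs by (simp add: sorted_nth_mono)
  qed
  moreover have "set (map (\<lambda>i. xs ! f i) [0..<Suc m]) \<subseteq> {..n}"
    using set_simplex_sop_subset[OF f] xs by auto
  ultimately show ?thesis by simp
qed

lemma simplex_0_eq_replicate: "d \<in> scar (simplex 0) n \<Longrightarrow> d = replicate (Suc n) 0"
  by (auto intro!: nth_equalityI simp: subset_iff nth_replicate less_Suc_eq_le simp del: replicate_Suc)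

lemma replicate_in_simplex: "c \<le> k \<Longrightarrow> replicate (Suc n) c \<in> scar (simplex k) n"
  by (simp del: replicate_Suc)

lemma simplex_sop_replicate:
  "simp_op m n f \<Longrightarrow> sop (simplex k) m n f (replicate (Suc n) c) = replicate (Suc m) c"
  by (auto intro!: nth_equalityI simp: nth_replicate less_Suc_eq_le simp_op_bound simp del: replicate_Suc)

lemma sset_closed: "is_sset X \<Longrightarrow> simp_op m n f \<Longrightarrow> x \<in> scar X n \<Longrightarrow> sop X m n f x \<in> scar X m"
  by (simp add: is_sset_def)

lemma sset_id: "is_sset X \<Longrightarrow> x \<in> scar X n \<Longrightarrow> sop X n n id x = x"
  by (simp add: is_sset_def)

lemma sset_comp:
  "is_sset X \<Longrightarrow> simp_op l m g \<Longrightarrow> simp_op m n f \<Longrightarrow> x \<in> scar X n \<Longrightarrow>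
    sop X l m g (sop X m n f x) = sop X l n (f \<circ> g) x"
  by (simp add: is_sset_def)

lemma sset_cong:
  "is_sset X \<Longrightarrow> simp_op m n f \<Longrightarrow> (\<And>i. i \<le> m \<Longrightarrow> f i = f' i) \<Longrightarrow> x \<in> scar X n \<Longrightarrow>
    sop X m n f x = sop X m n f' x"
  by (simp add: is_sset_def)

lemma sset_id_on:
  "is_sset X \<Longrightarrow> simp_op n n f \<Longrightarrow> (\<And>i. i \<le> n \<Longrightarrow> f i = i) \<Longrightarrow> x \<in> scar X n \<Longrightarrow>
    sop X n n f x = x"
  by (metis id_apply sset_cong sset_id)

lemma sset_sop_nth_comp:
  assumes K: "is_sset K" and u: "u \<in> scar (simplex n) m" and f: "simp_op m' m f"
    and b: "b \<in> scar K n"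
  shows "sop K m' n (nth (sop (simplex n) m' m f u)) b = sop K m' m f (sop K m n (nth u) b)"
proof -
  have "sop K m' m f (sop K m n (nth u) b) = sop K m' n (nth u \<circ> f) b"
    using sset_comp[OF K f simp_op_nth[OF u] b] .
  also have "\<dots> = sop K m' n (nth (sop (simplex n) m' m f u)) b"
    by (rule sset_cong[OF K simp_op_comp[OF f simp_op_nth[OF u]] _ b]) (simp add: less_Suc_eq_le)
  finally show ?thesis by simp
qed

lemma smorph_closed: "smorph X Y g \<Longrightarrow> x \<in> scar X n \<Longrightarrow> g n x \<in> scar Y n"
  by (simp add: smorph_def)

lemma smorph_sop:
  "smorph X Y g \<Longrightarrow> simp_op m n f \<Longrightarrow> x \<in> scar X n \<Longrightarrow> g m (sop X m n f x) = sop Y m n f (g n x)"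
  by (simp add: smorph_def)

definition smorph_on :: "'a sset \<Rightarrow> (nat \<Rightarrow> 'a set) \<Rightarrow> 'b sset \<Rightarrow> (nat \<Rightarrow> 'a \<Rightarrow> 'b) \<Rightarrow> bool" where
  "smorph_on K S Z q \<longleftrightarrow> (\<forall>m s. s \<in> S m \<longrightarrow> q m s \<in> scar Z m) \<and>
     (\<forall>m n f s. simp_op m n f \<longrightarrow> s \<in> S n \<longrightarrow> q m (sop K m n f s) = sop Z m n f (q n s))"

lemma smorph_iff_smorph_on: "smorph K Z q \<longleftrightarrow> smorph_on K (scar K) Z q"
  by (simp add: smorph_def smorph_on_def)

lemma smorph_on_closed: "smorph_on K S Z q \<Longrightarrow> s \<in> S m \<Longrightarrow> q m s \<in> scar Z m"
  by (simp add: smorph_on_def)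

lemma smorph_on_sop:
  "smorph_on K S Z q \<Longrightarrow> simp_op m n f \<Longrightarrow> s \<in> S n \<Longrightarrow> q m (sop K m n f s) = sop Z m n f (q n s)"
  by (simp add: smorph_on_def)

lemma smorph_on_comp:
  assumes q: "smorph_on K S Z q"
    and g_in: "\<And>m x. x \<in> scar L m \<Longrightarrow> g m x \<in> S m"
    and g_sop: "\<And>m n f x. simp_op m n f \<Longrightarrow> x \<in> scar L n \<Longrightarrow> g m (sop L m n f x) = sop K m n f (g n x)"
  shows "smorph L Z (\<lambda>m x. q m (g m x))"
  unfolding smorph_def using smorph_on_closed[OF q] smorph_on_sop[OF q] g_in g_sop by simp

section \<open>The Eilenberg--Zilber lemma\<close>

definition surj_op :: "nat \<Rightarrow> nat \<Rightarrow> (nat \<Rightarrow> nat) \<Rightarrow> bool" where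
  "surj_op m k g \<longleftrightarrow> simp_op m k g \<and> (\<forall>j\<le>k. \<exists>i\<le>m. g i = j)"

definition nondeg :: "'a sset \<Rightarrow> nat \<Rightarrow> 'a \<Rightarrow> bool" where
  "nondeg B k b \<longleftrightarrow> b \<in> scar B k \<and>
     (\<forall>k' g b'. k' < k \<longrightarrow> surj_op k k' g \<longrightarrow> b' \<in> scar B k' \<longrightarrow> b \<noteq> sop B k k' g b')"

lemma surj_op_simp_op: "surj_op m k g \<Longrightarrow> simp_op m k g"
  by (simp add: surj_op_def)

lemma nondeg_in: "nondeg B k b \<Longrightarrow> b \<in> scar B k"
  by (simp add: nondeg_def)

lemma nondegD:
  "nondeg B k b \<Longrightarrow> k' < k \<Longrightarrow> surj_op k k' g \<Longrightarrow> b' \<in> scar B k' \<Longrightarrow> b \<noteq> sop B k k' g b'"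
  by (simp add: nondeg_def)

lemma surj_op_id: "surj_op m m id"
  by (auto simp: surj_op_def simp_op_id)

lemma surj_op_comp: "surj_op l m g \<Longrightarrow> surj_op m n f \<Longrightarrow> surj_op l n (f \<circ> g)"
  unfolding surj_op_def using simp_op_comp by fastforce

lemma surj_op_nth:
  assumes "u \<in> scar (simplex k) m" and "{..k} \<subseteq> set u"
  shows "surj_op m k (nth u)"
  using assms simp_op_nth[OF assms(1)] by (force simp: surj_op_def in_set_conv_nth less_Suc_eq_le)

lemma surj_op_nth_iff:
  assumes "u \<in> scar (simplex k) m"
  shows "surj_op m k (nth u) \<longleftrightarrow> {..k} \<subseteq> set u"
  using assms surj_op_nth by (force simp: surj_op_def less_Suc_eq_le)

lemma ez_exists:
  assumes B: "is_sset B" and c: "c \<in> scar B m"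
  shows "\<exists>k g b. surj_op m k g \<and> nondeg B k b \<and> c = sop B m k g b"
  using c
proof (induction m arbitrary: c rule: less_induct)
  case (less m)
  show ?case
  proof (cases "nondeg B m c")
    case True
    then show ?thesis using surj_op_id sset_id[OF B less.prems] by metis
  next
    case False
    then obtain k' g b' where kg: "k' < m" "surj_op m k' g" "b' \<in> scar B k'" "c = sop B m k' g b'"
      using less.prems by (auto simp: nondeg_def)
    obtain k g2 b where b: "surj_op k' k g2" "nondeg B k b" "b' = sop B k' k g2 b"
      using less.IH[OF kg(1) kg(3)] by blast
    have "c = sop B m k (g2 \<circ> g) b"
      using kg b sset_comp[OF B, of m k' g k g2 b] by (simp add: nondeg_in surj_op_simp_op)
    then show ?thesis using surj_op_comp[OF kg(2) b(1)] b(2) by blast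
  qed
qed

lemma stepwise_less_ge:
  assumes "\<forall>a<k. \<phi> a < \<phi> (Suc a)" and "i \<le> k"
  shows "i + \<phi> 0 \<le> \<phi> i"
  using assms(2)
proof (induction i)
  case (Suc i)
  then have "\<phi> i < \<phi> (Suc i)" using assms(1) by simp
  then show ?case using Suc by simp
qed simp

lemma stepwise_less_le:
  assumes "\<forall>a<k. \<phi> a < \<phi> (Suc a)" and "i \<le> k"
  shows "\<phi> i + (k - i) \<le> \<phi> k"
  using assms(2)
proof (induction "k - i" arbitrary: i)
  case (Suc d)
  then have "\<phi> (Suc i) + (k - Suc i) \<le> \<phi> k" by simp
  moreover have "\<phi> i < \<phi> (Suc i)" using assms(1) Suc.hyps(2) by simp
  ultimately show ?case using Suc.hyps(2) by simp
qed simp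

lemma stepwise_less_dim_le:
  assumes "simp_op k k' \<phi>" and "\<forall>a<k. \<phi> a < \<phi> (Suc a)"
  shows "k \<le> k'"
  using stepwise_less_ge[OF assms(2), of k] simp_op_bound[OF assms(1), of k] by simp

lemma stepwise_less_self_id:
  assumes "simp_op k k \<phi>" and "\<forall>a<k. \<phi> a < \<phi> (Suc a)" and "i \<le> k"
  shows "\<phi> i = i"
  using stepwise_less_ge[OF assms(2,3)] stepwise_less_le[OF assms(2,3)] simp_op_bound[OF assms(1), of k]
  by simp

text \<open>A section of g taking the value i at g i; the freedom in i is what pins down the
  degeneracy in ez_unique.\<close>

definition surj_section :: "(nat \<Rightarrow> nat) \<Rightarrow> nat \<Rightarrow> nat \<Rightarrow> nat" where
  "surj_section g i j = (if j = g i then i else (LEAST i'. g i' = j))"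

lemma surj_section:
  assumes g: "surj_op m k g" and i: "i \<le> m"
  shows "simp_op k m (surj_section g i)" and "\<And>j. j \<le> k \<Longrightarrow> g (surj_section g i j) = j"
    and "surj_section g i (g i) = i"
proof -
  have least: "g (LEAST i'. g i' = j) = j \<and> (LEAST i'. g i' = j) \<le> m" if j: "j \<le> k" for j
  proof -
    obtain i0 where "i0 \<le> m" "g i0 = j" using g j by (auto simp: surj_op_def)
    then show ?thesis using LeastI[of "\<lambda>i'. g i' = j" i0] Least_le[of "\<lambda>i'. g i' = j" i0] by auto
  qed
  show inv: "\<And>j. j \<le> k \<Longrightarrow> g (surj_section g i j) = j"
    using least by (simp add: surj_section_def)
  show "surj_section g i (g i) = i" by (simp add: surj_section_def)
  have bound: "surj_section g i j \<le> m" if "j \<le> k" for j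
    using least[OF that] i by (simp add: surj_section_def)
  have "surj_section g i j1 \<le> surj_section g i j2" if "j1 \<le> j2" "j2 \<le> k" for j1 j2
  proof (rule ccontr)
    assume gt: "\<not> surj_section g i j1 \<le> surj_section g i j2"
    then have "g (surj_section g i j2) \<le> g (surj_section g i j1)"
      using simp_op_mono[OF surj_op_simp_op[OF g]] bound that by simp
    then have "j1 = j2" using inv that by simp
    then show False using gt by simp
  qed
  then show "simp_op k m (surj_section g i)" unfolding simp_op_def using bound by blast
qed

definition degen_op :: "nat \<Rightarrow> nat \<Rightarrow> nat" where
  "degen_op a i = (if i \<le> a then i else i - 1)"

definition face_op :: "nat \<Rightarrow> nat \<Rightarrow> nat" where
  "face_op a i = (if i \<le> a then i else Suc i)"

lemma degen_op_mono: "i \<le> j \<Longrightarrow> degen_op a i \<le> degen_op a j"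
  by (auto simp: degen_op_def)

lemma surj_op_degen_op:
  assumes a: "a < k"
  shows "surj_op k (k - 1) (degen_op a)"
  unfolding surj_op_def simp_op_def
proof (intro conjI allI impI)
  show "degen_op a i \<le> degen_op a j" if "i \<le> j" for i j
    using that by (rule degen_op_mono)
  show "degen_op a i \<le> k - 1" if "i \<le> k" for i
    using that a by (auto simp: degen_op_def)
  show "\<exists>i\<le>k. degen_op a i = j" if j: "j \<le> k - 1" for j
  proof (cases "j \<le> a")
    case True then show ?thesis using a by (intro exI[of _ j]) (simp add: degen_op_def)
  next
    case False then show ?thesis using a j by (intro exI[of _ "Suc j"]) (simp add: degen_op_def)
  qed
qed

lemma simp_op_face_op: "a < k \<Longrightarrow> simp_op (k - 1) k (face_op a)"
  unfolding simp_op_def face_op_def by auto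

lemma sop_factor_degen_op:
  assumes B: "is_sset B" and \<phi>: "simp_op k k' \<phi>" and b': "b' \<in> scar B k'"
    and a: "a < k" "\<phi> a = \<phi> (Suc a)"
  shows "sop B k k' \<phi> b' = sop B k (k - 1) (degen_op a) (sop B (k - 1) k' (\<phi> \<circ> face_op a) b')"
proof -
  have s: "simp_op k (k - 1) (degen_op a)" using surj_op_degen_op[OF a(1)] by (rule surj_op_simp_op)
  have c: "simp_op (k - 1) k' (\<phi> \<circ> face_op a)" using simp_op_comp[OF simp_op_face_op[OF a(1)] \<phi>] .
  have "i \<le> k \<Longrightarrow> \<phi> (face_op a (degen_op a i)) = \<phi> i" for i
    using a by (cases "i = Suc a") (auto simp: face_op_def degen_op_def)
  then have "sop B k k' (\<phi> \<circ> face_op a \<circ> degen_op a) b' = sop B k k' \<phi> b'"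
    using sset_cong[OF B simp_op_comp[OF s c] _ b'] by (simp add: comp_assoc)
  then show ?thesis using sset_comp[OF B s c b'] by simp
qed

lemma nondeg_sop_stepwise_less:
  assumes B: "is_sset B" and nb: "nondeg B k b" and \<phi>: "simp_op k k' \<phi>" and b': "b' \<in> scar B k'"
    and eq: "b = sop B k k' \<phi> b'"
  shows "\<forall>a<k. \<phi> a < \<phi> (Suc a)"
proof (intro allI impI)
  fix a assume a: "a < k"
  have "\<phi> a \<noteq> \<phi> (Suc a)"
  proof
    assume "\<phi> a = \<phi> (Suc a)"
    then have "b = sop B k (k - 1) (degen_op a) (sop B (k - 1) k' (\<phi> \<circ> face_op a) b')"
      using sop_factor_degen_op[OF B \<phi> b' a] eq by simp
    moreover have "b \<noteq> sop B k (k - 1) (degen_op a) (sop B (k - 1) k' (\<phi> \<circ> face_op a) b')"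
      using a by (intro nondegD[OF nb _ surj_op_degen_op[OF a]]
          sset_closed[OF B simp_op_comp[OF simp_op_face_op[OF a] \<phi>] b']) simp
    ultimately show False by simp
  qed
  then show "\<phi> a < \<phi> (Suc a)" using simp_op_mono[OF \<phi>, of a "Suc a"] a by simp
qed

text \<open>The core of Eilenberg--Zilber uniqueness: composing with a section \<delta> of g exhibits
  the nondegenerate b as an injective operator applied to b'.\<close>

lemma nondeg_sop_section:
  assumes B: "is_sset B" and nb: "nondeg B k b" and g: "surj_op m k g"
    and g': "simp_op m k' g'" and b': "b' \<in> scar B k'" and eq: "sop B m k g b = sop B m k' g' b'"
    and \<delta>: "simp_op k m \<delta>" "\<And>j. j \<le> k \<Longrightarrow> g (\<delta> j) = j"
  shows "b = sop B k k' (g' \<circ> \<delta>) b'" and "simp_op k k' (g' \<circ> \<delta>)"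
    and "\<forall>a<k. (g' \<circ> \<delta>) a < (g' \<circ> \<delta>) (Suc a)"
proof -
  have gm: "simp_op m k g" using g by (rule surj_op_simp_op)
  have "b = sop B k k (g \<circ> \<delta>) b"
    using sset_id_on[OF B simp_op_comp[OF \<delta>(1) gm] _ nondeg_in[OF nb]] \<delta>(2) by simp
  also have "\<dots> = sop B k m \<delta> (sop B m k g b)" using sset_comp[OF B \<delta>(1) gm nondeg_in[OF nb]] by simp
  also have "\<dots> = sop B k k' (g' \<circ> \<delta>) b'" using eq sset_comp[OF B \<delta>(1) g' b'] by simp
  finally show b: "b = sop B k k' (g' \<circ> \<delta>) b'" .
  show op: "simp_op k k' (g' \<circ> \<delta>)" using simp_op_comp[OF \<delta>(1) g'] .
  show "\<forall>a<k. (g' \<circ> \<delta>) a < (g' \<circ> \<delta>) (Suc a)" using nondeg_sop_stepwise_less[OF B nb op b' b] .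
qed

lemma nondeg_sop_dim_le:
  assumes B: "is_sset B" and nb: "nondeg B k b" and g: "surj_op m k g"
    and g': "simp_op m k' g'" and b': "b' \<in> scar B k'" and eq: "sop B m k g b = sop B m k' g' b'"
  shows "k \<le> k'"
  using nondeg_sop_section[OF B nb g g' b' eq surj_section(1,2)[OF g le0]] stepwise_less_dim_le
  by blast

lemma ez_unique:
  assumes B: "is_sset B" and nb: "nondeg B k b" and g: "surj_op m k g"
    and nb': "nondeg B k' b'" and g': "surj_op m k' g'" and eq: "sop B m k g b = sop B m k' g' b'"
  shows "k = k'" and "b = b'" and "\<And>i. i \<le> m \<Longrightarrow> g i = g' i"
proof -
  note gm = surj_op_simp_op[OF g] and gm' = surj_op_simp_op[OF g']
  show kk: "k = k'"
    using nondeg_sop_dim_le[OF B nb g gm' nondeg_in[OF nb'] eq]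
      nondeg_sop_dim_le[OF B nb' g' gm nondeg_in[OF nb] eq[symmetric]] by simp
  have sec: "b = sop B k k' (g' \<circ> surj_section g i) b' \<and> (\<forall>j\<le>k. (g' \<circ> surj_section g i) j = j)"
    if i: "i \<le> m" for i
    using nondeg_sop_section[OF B nb g gm' nondeg_in[OF nb'] eq surj_section(1,2)[OF g i]]
      stepwise_less_self_id[of k "g' \<circ> surj_section g i"] kk by auto
  show "b = b'"
    using sec[OF le0] sset_id_on[OF B _ _ nondeg_in[OF nb']] kk
      simp_op_comp[OF surj_section(1)[OF g le0] gm'] by auto
  show "g i = g' i" if i: "i \<le> m" for i
    using sec[OF i] simp_op_bound[OF gm i] surj_section(3)[OF g i] by fastforce
qed

definition ez :: "'a sset \<Rightarrow> nat \<Rightarrow> 'a \<Rightarrow> nat \<times> (nat \<Rightarrow> nat) \<times> 'a" where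
  "ez B m c = (SOME (k, g, b). surj_op m k g \<and> nondeg B k b \<and> c = sop B m k g b)"

lemma ez_spec:
  assumes B: "is_sset B" and c: "c \<in> scar B m" and e: "ez B m c = (k, g, b)"
  shows "surj_op m k g" and "nondeg B k b" and "c = sop B m k g b"
proof -
  have "\<exists>x. case x of (k, g, b) \<Rightarrow> surj_op m k g \<and> nondeg B k b \<and> c = sop B m k g b"
    using ez_exists[OF B c] by auto
  then have "case ez B m c of (k, g, b) \<Rightarrow> surj_op m k g \<and> nondeg B k b \<and> c = sop B m k g b"
    unfolding ez_def by (rule someI_ex)
  then show "surj_op m k g" and "nondeg B k b" and "c = sop B m k g b" using e by auto
qed

lemma ez_sop_nondeg:
  assumes B: "is_sset B" and g: "surj_op m k g" and nb: "nondeg B k b"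
    and e: "ez B m (sop B m k g b) = (k', g', b')"
  shows "k' = k" and "b' = b" and "\<And>i. i \<le> m \<Longrightarrow> g' i = g i"
proof -
  have "sop B m k g b \<in> scar B m"
    using sset_closed[OF B surj_op_simp_op[OF g] nondeg_in[OF nb]] .
  note s = ez_spec[OF B this e]
  show "k' = k" and "b' = b" and "\<And>i. i \<le> m \<Longrightarrow> g' i = g i"
    using ez_unique[OF B s(2) s(1) nb g s(3)[symmetric]] by auto
qed

lemma ez_dim_le:
  assumes B: "is_sset B" and c: "c \<in> scar B m"
  shows "fst (ez B m c) \<le> m"
proof -
  obtain k g b where e: "ez B m c = (k, g, b)" by (metis prod_cases3)
  note s = ez_spec[OF B c e]
  have "sop B m k g b = sop B m m id c" using s(3) sset_id[OF B c] by simp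
  then show ?thesis using nondeg_sop_dim_le[OF B s(2) s(1) simp_op_id c] e by simp
qed

lemma ez_dim_less_nonsurj:
  assumes B: "is_sset B" and f: "simp_op m r f" and b0: "b0 \<in> scar B r"
    and nonsurj: "\<not> (\<forall>j\<le>r. \<exists>i\<le>m. f i = j)"
  shows "fst (ez B m (sop B m r f b0)) < r"
proof -
  obtain k g b where e: "ez B m (sop B m r f b0) = (k, g, b)" by (metis prod_cases3)
  note s = ez_spec[OF B sset_closed[OF B f b0] e]
  note sec = surj_section[OF s(1) le0]
  note cmp = nondeg_sop_section[OF B s(2) s(1) f b0 s(3)[symmetric] sec(1,2)]
  have "k \<noteq> r"
  proof
    assume kr: "k = r"
    obtain w where w: "w \<le> r" "\<forall>i\<le>m. f i \<noteq> w" using nonsurj by blast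
    have "f (surj_section g 0 w) = w"
      using stepwise_less_self_id[of r "f \<circ> surj_section g 0" w] cmp(2,3) kr w(1) by simp
    moreover have "surj_section g 0 w \<le> m" using simp_op_bound[OF sec(1)] w(1) kr by simp
    ultimately show False using w(2) by auto
  qed
  then show ?thesis using stepwise_less_dim_le[OF cmp(2,3)] e by simp
qed

section \<open>Right fibrations lift prisms\<close>

abbreviation prism :: "nat \<Rightarrow> (nat list \<times> nat list) sset" where
  "prism N \<equiv> sprod_interval (simplex N)"

type_synonym 'a prism_map = "nat \<Rightarrow> nat list \<times> nat list \<Rightarrow> 'a"

lemma prism_scar [simp]:
  "(u, t) \<in> scar (prism N) m \<longleftrightarrow> u \<in> scar (simplex N) m \<and> t \<in> scar (simplex 1) m"
  by (simp add: sprod_interval_def)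

lemma prism_sop [simp]:
  "sop (prism N) m n f (u, t) = (map (\<lambda>i. u ! f i) [0..<Suc m], map (\<lambda>i. t ! f i) [0..<Suc m])"
  by (simp add: sprod_interval_def)

lemma horn_scar [simp]:
  "v \<in> scar (horn n k) m \<longleftrightarrow> v \<in> scar (simplex n) m \<and> set v \<union> {k} \<noteq> {..n}"
  by (simp add: horn_def)

lemma horn_sop [simp]: "sop (horn n k) = sop (simplex n)"
  by (simp add: horn_def)

text \<open>The nondegenerate (N+1)-simplices of \<Delta>[N] \<times> \<Delta>[1] are
  \<sigma> i = ((0,0), ..., (i,0), (i,1), ..., (N,1)) for i \<le> N; prism_simplex i embeds \<Delta>[N+1]
  as \<sigma> i, and in_prism_simplex m i u t says that the m-simplex (u, t) lies in \<sigma> i.\<close>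

definition in_prism_simplex :: "nat \<Rightarrow> nat \<Rightarrow> nat list \<Rightarrow> nat list \<Rightarrow> bool" where
  "in_prism_simplex m i u t \<longleftrightarrow> (\<forall>q\<le>m. (t ! q = 0 \<longrightarrow> u ! q \<le> i) \<and> (t ! q \<noteq> 0 \<longrightarrow> i \<le> u ! q))"

definition prism_simplex :: "nat \<Rightarrow> nat list \<Rightarrow> nat list \<times> nat list" where
  "prism_simplex i v = (map (degen_op i) v, map (\<lambda>k. if k \<le> i then 0 else 1) v)"

definition prism_simplex_inv :: "nat list \<times> nat list \<Rightarrow> nat list" where
  "prism_simplex_inv s = map (\<lambda>q. fst s ! q + snd s ! q) [0..<length (fst s)]"

text \<open>The filtration of the prism starting at \<partial>\<Delta>[N] \<times> \<Delta>[1] \<union> \<Delta>[N] \<times> {1} and adding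
  \<sigma> 0, ..., \<sigma> (j - 1). The simplex \<sigma> j meets the j-th stage exactly in its horn
  \<Lambda>^(j+1)[N+1], so only right horns have to be filled.\<close>

definition prism_filt :: "nat \<Rightarrow> nat \<Rightarrow> nat \<Rightarrow> (nat list \<times> nat list) set" where
  "prism_filt N j m = {(u, t). (u, t) \<in> scar (prism N) m \<and>
     (\<not> {..N} \<subseteq> set u \<or> set t \<subseteq> {1} \<or> (\<exists>i<j. in_prism_simplex m i u t))}"

lemma prism_filt_subset: "s \<in> prism_filt N j m \<Longrightarrow> s \<in> scar (prism N) m"
  by (auto simp: prism_filt_def)

lemma prism_filt_mono: "j \<le> j' \<Longrightarrow> s \<in> prism_filt N j m \<Longrightarrow> s \<in> prism_filt N j' m"
  unfolding prism_filt_def by (auto dest: order.strict_trans2)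

lemma prism_filt_sop:
  assumes f: "simp_op m n f" and s: "s \<in> prism_filt N j n"
  shows "sop (prism N) m n f s \<in> prism_filt N j m"
proof -
  obtain u t where st: "s = (u, t)" by force
  have pr: "(u, t) \<in> scar (prism N) n" using s st prism_filt_subset by blast
  let ?u = "map (\<lambda>i. u ! f i) [0..<Suc m]" and ?t = "map (\<lambda>i. t ! f i) [0..<Suc m]"
  have "(?u, ?t) \<in> scar (prism N) m"
    using simplex_sop_closed[OF f] pr by auto
  moreover have "set ?u \<subseteq> set u" and "set ?t \<subseteq> set t"
    using set_simplex_sop_subset[OF f] pr by auto
  moreover have "in_prism_simplex m i ?u ?t" if "in_prism_simplex n i u t" for i
    using that simp_op_bound[OF f] unfolding in_prism_simplex_def by (simp add: less_Suc_eq_le)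
  ultimately show ?thesis using s st unfolding prism_filt_def by auto
qed

lemma prism_filt_top:
  assumes "s \<in> scar (prism N) m"
  shows "s \<in> prism_filt N (Suc N) m"
proof -
  obtain u t where st: "s = (u, t)" by force
  have u: "u \<in> scar (simplex N) m" and t: "t \<in> scar (simplex 1) m" using assms st by auto
  show ?thesis
  proof (cases "set t \<subseteq> {1}")
    case True then show ?thesis using assms st by (simp add: prism_filt_def)
  next
    case False
    define qm where "qm = Max {q. q \<le> m \<and> t ! q = 0}"
    from False obtain x where "x \<in> set t" "x \<noteq> 1" by auto
    then obtain q where "q \<le> m" "t ! q \<noteq> 1"
      using t by (auto simp: in_set_conv_nth less_Suc_eq_le)
    then have "\<exists>q\<le>m. t ! q = 0" using nth_simplex_bound[OF t] by force
    then have qm: "qm \<le> m" "t ! qm = 0" and qmax: "\<And>q. q \<le> m \<Longrightarrow> t ! q = 0 \<Longrightarrow> q \<le> qm"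
      unfolding qm_def using Max_in[of "{q. q \<le> m \<and> t ! q = 0}"] by auto
    have after: "qm < q" if "t ! q \<noteq> 0" "q \<le> m" for q
      using qm t sorted_nth_mono[of t q qm] that by (fastforce simp: not_less)
    have "in_prism_simplex m (u ! qm) u t"
      unfolding in_prism_simplex_def
    proof (intro allI impI conjI)
      fix q assume q: "q \<le> m"
      show "u ! q \<le> u ! qm" if "t ! q = 0"
        using qmax[OF q that] qm(1) u by (simp add: sorted_nth_mono)
      show "u ! qm \<le> u ! q" if "t ! q \<noteq> 0"
        using after[OF that q] q u by (simp add: sorted_nth_mono)
    qed
    moreover have "u ! qm \<le> N" using nth_simplex_bound[OF u qm(1)] .
    ultimately show ?thesis using assms st by (auto simp: prism_filt_def)
  qed
qed

lemma prism_filt_Suc_diff: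
  "s \<in> prism_filt N (Suc j) m \<Longrightarrow> s \<notin> prism_filt N j m \<Longrightarrow> in_prism_simplex m j (fst s) (snd s)"
  unfolding prism_filt_def by (auto simp: less_Suc_eq)

lemma prism_simplex_in:
  assumes v: "v \<in> scar (simplex (Suc N)) m" and j: "j \<le> N"
  shows "prism_simplex j v \<in> scar (prism N) m"
proof -
  have "sorted (map (degen_op j) v)"
    using v by (simp add: sorted_iff_nth_mono degen_op_mono)
  moreover have "sorted (map (\<lambda>k. if k \<le> j then 0 else 1::nat) v)"
    using v by (auto simp: sorted_iff_nth_mono) (meson le_trans)
  ultimately show ?thesis
    using v j by (auto simp: prism_simplex_def degen_op_def)
qed

lemma prism_simplex_sop:
  assumes f: "simp_op m n f" and v: "v \<in> scar (simplex (Suc N)) n"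
  shows "prism_simplex j (sop (simplex (Suc N)) m n f v) = sop (prism N) m n f (prism_simplex j v)"
  using simp_op_bound[OF f] v by (simp add: prism_simplex_def less_Suc_eq_le)

lemma prism_simplex_inv_inverse: "prism_simplex_inv (prism_simplex j v) = v"
  by (intro nth_equalityI) (auto simp: prism_simplex_inv_def prism_simplex_def degen_op_def)

lemma prism_simplex_prism_simplex_inv:
  assumes s: "s \<in> scar (prism N) m" and j: "in_prism_simplex m j (fst s) (snd s)"
  shows "prism_simplex j (prism_simplex_inv s) = s"
    and "prism_simplex_inv s \<in> scar (simplex (Suc N)) m"
proof -
  obtain u t where st: "s = (u, t)" by force
  have u: "u \<in> scar (simplex N) m" and t: "t \<in> scar (simplex 1) m" using s st by auto
  have t01: "t ! q = 0 \<or> t ! q = 1" if "q \<le> m" for q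
    using nth_simplex_bound[OF t that] by auto
  have "degen_op j (u ! q + t ! q) = u ! q \<and> (if u ! q + t ! q \<le> j then 0 else 1) = t ! q"
    if "q \<le> m" for q
    using t01[OF that] j that st unfolding in_prism_simplex_def degen_op_def by force
  then show "prism_simplex j (prism_simplex_inv s) = s"
    using u t st by (auto simp: prism_simplex_def prism_simplex_inv_def list_eq_iff_nth_eq less_Suc_eq_le)
  have "sorted (prism_simplex_inv s)"
    using u t st by (auto simp: prism_simplex_inv_def sorted_iff_nth_mono intro!: add_mono)
  moreover have "set (prism_simplex_inv s) \<subseteq> {..Suc N}"
    using nth_simplex_bound[OF u] t01 u st by (fastforce simp: prism_simplex_inv_def less_Suc_eq_le)
  ultimately show "prism_simplex_inv s \<in> scar (simplex (Suc N)) m"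
    using u st by (simp add: prism_simplex_inv_def)
qed

lemma atMost_subset_degen_op_image:
  assumes A: "A \<subseteq> {..Suc N}" and j: "j \<le> N"
  shows "{..N} \<subseteq> degen_op j ` A \<longleftrightarrow>
    (\<forall>k\<le>Suc N. k \<noteq> j \<longrightarrow> k \<noteq> Suc j \<longrightarrow> k \<in> A) \<and> (j \<in> A \<or> Suc j \<in> A)"
proof
  assume sub: "{..N} \<subseteq> degen_op j ` A"
  have "k \<in> A" if "k \<le> Suc N" "k \<noteq> j" "k \<noteq> Suc j" for k
  proof (cases "k < j")
    case True
    then have "k \<in> degen_op j ` A" using sub j by auto
    then obtain x where "x \<in> A" "degen_op j x = k" by blast
    then show ?thesis using True by (auto simp: degen_op_def split: if_splits)
  next
    case False
    then have "k - 1 \<in> degen_op j ` A" using sub that by auto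
    then obtain x where "x \<in> A" "degen_op j x = k - 1" by (metis imageE)
    moreover from this have "x = k" using False that by (auto simp: degen_op_def split: if_splits)
    ultimately show ?thesis by simp
  qed
  moreover have "j \<in> degen_op j ` A" using sub j by auto
  then obtain x where "x \<in> A" "degen_op j x = j" by (metis imageE)
  then have "j \<in> A \<or> Suc j \<in> A" by (auto simp: degen_op_def split: if_splits)
  ultimately show "(\<forall>k\<le>Suc N. k \<noteq> j \<longrightarrow> k \<noteq> Suc j \<longrightarrow> k \<in> A) \<and> (j \<in> A \<or> Suc j \<in> A)"
    by blast
next
  assume cover: "(\<forall>k\<le>Suc N. k \<noteq> j \<longrightarrow> k \<noteq> Suc j \<longrightarrow> k \<in> A) \<and> (j \<in> A \<or> Suc j \<in> A)"
  show "{..N} \<subseteq> degen_op j ` A"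
  proof
    fix w assume w: "w \<in> {..N}"
    consider "w < j" | "w = j" | "j < w" by linarith
    then show "w \<in> degen_op j ` A"
    proof cases
      case 1 then show ?thesis using cover w by (force simp: degen_op_def image_iff)
    next
      case 2 then show ?thesis using cover by (force simp: degen_op_def image_iff)
    next
      case 3
      then have "Suc w \<in> A" using cover w by auto
      then show ?thesis using 3 by (force simp: degen_op_def image_iff)
    qed
  qed
qed

lemma ex_in_prism_simplex_below_iff:
  assumes v: "v \<in> scar (simplex (Suc N)) m"
  shows "(\<exists>i<j. in_prism_simplex m i (map (degen_op j) v) (map (\<lambda>k. if k \<le> j then 0 else 1::nat) v))
    \<longleftrightarrow> 0 < j \<and> j \<notin> set v"
    (is "(\<exists>i<j. in_prism_simplex m i ?u ?t) \<longleftrightarrow> _")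
proof
  assume "\<exists>i<j. in_prism_simplex m i ?u ?t"
  then obtain i where "i < j" "in_prism_simplex m i ?u ?t" by blast
  then show "0 < j \<and> j \<notin> set v"
    using v by (fastforce simp: in_prism_simplex_def in_set_conv_nth degen_op_def less_Suc_eq_le)
next
  assume "0 < j \<and> j \<notin> set v"
  then have v_ne: "v ! q \<noteq> j" if "q \<le> m" for q
    using v that nth_mem[of q v] by auto
  have "in_prism_simplex m (j - 1) ?u ?t"
    unfolding in_prism_simplex_def
  proof (intro allI impI)
    fix q assume q: "q \<le> m"
    show "(?t ! q = 0 \<longrightarrow> ?u ! q \<le> j - 1) \<and> (?t ! q \<noteq> 0 \<longrightarrow> j - 1 \<le> ?u ! q)"
      using v_ne[OF q] q v by (auto simp: degen_op_def less_Suc_eq_le)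
  qed
  then show "\<exists>i<j. in_prism_simplex m i ?u ?t"
    using \<open>0 < j \<and> j \<notin> set v\<close> by (intro exI[of _ "j - 1"]) simp
qed

lemma prism_simplex_in_prism_filt_iff:
  assumes v: "v \<in> scar (simplex (Suc N)) m" and j: "j \<le> N"
  shows "prism_simplex j v \<in> prism_filt N j m \<longleftrightarrow> v \<in> scar (horn (Suc N) (Suc j)) m"
proof -
  let ?t = "map (\<lambda>k. if k \<le> j then 0 else 1::nat) v"
  have t1: "set ?t \<subseteq> {1} \<longleftrightarrow> (\<forall>k\<le>j. k \<notin> set v)"
    by auto
  have below: "(\<exists>i<j. in_prism_simplex m i (map (degen_op j) v) ?t) \<longleftrightarrow> 0 < j \<and> j \<notin> set v"
    using v by (rule ex_in_prism_simplex_below_iff)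
  have cover: "{..N} \<subseteq> set (map (degen_op j) v) \<longleftrightarrow>
      (\<forall>k\<le>Suc N. k \<noteq> j \<longrightarrow> k \<noteq> Suc j \<longrightarrow> k \<in> set v) \<and> (j \<in> set v \<or> Suc j \<in> set v)"
    using atMost_subset_degen_op_image[of "set v" N j] v j by simp
  have "prism_simplex j v \<in> prism_filt N j m \<longleftrightarrow>
      \<not> {..N} \<subseteq> set (map (degen_op j) v) \<or> set ?t \<subseteq> {1} \<or>
      (\<exists>i<j. in_prism_simplex m i (map (degen_op j) v) ?t)"
    using prism_simplex_in[OF v j]
    unfolding prism_filt_def prism_simplex_def mem_Collect_eq case_prod_conv by blast
  also have "\<dots> \<longleftrightarrow>
      \<not> ((\<forall>k\<le>Suc N. k \<noteq> j \<longrightarrow> k \<noteq> Suc j \<longrightarrow> k \<in> set v) \<and> (j \<in> set v \<or> Suc j \<in> set v)) \<or>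
      (\<forall>k\<le>j. k \<notin> set v) \<or> (0 < j \<and> j \<notin> set v)"
    unfolding t1 below cover ..
  also have "\<dots> \<longleftrightarrow> (\<exists>k\<le>Suc N. k \<noteq> Suc j \<and> k \<notin> set v)"
  proof
    assume "\<exists>k\<le>Suc N. k \<noteq> Suc j \<and> k \<notin> set v"
    then obtain k where "k \<le> Suc N" "k \<noteq> Suc j" "k \<notin> set v" by blast
    then show "\<not> ((\<forall>k\<le>Suc N. k \<noteq> j \<longrightarrow> k \<noteq> Suc j \<longrightarrow> k \<in> set v) \<and> (j \<in> set v \<or> Suc j \<in> set v)) \<or>
      (\<forall>k\<le>j. k \<notin> set v) \<or> (0 < j \<and> j \<notin> set v)"
      by (cases "k = j"; cases "j = 0") auto
  qed (use j in \<open>auto intro: le_SucI\<close>)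
  also have "\<dots> \<longleftrightarrow> v \<in> scar (horn (Suc N) (Suc j)) m"
    using v j by auto
  finally show ?thesis .
qed

lemma right_fibration_smorph: "right_fibration X Y p \<Longrightarrow> smorph X Y p"
  by (simp add: right_fibration_def)

lemma right_fibration_horn_lift:
  assumes "right_fibration X Y p" and "0 < k" and "k \<le> n"
    and "smorph (horn n k) X a" and "smorph (simplex n) Y b"
    and "\<And>m s. s \<in> scar (horn n k) m \<Longrightarrow> p m (a m s) = b m s"
  obtains l where "smorph (simplex n) X l"
    and "\<And>m s. s \<in> scar (horn n k) m \<Longrightarrow> l m s = a m s"
    and "\<And>m s. s \<in> scar (simplex n) m \<Longrightarrow> p m (l m s) = b m s"
proof -
  have "has_rlp_horn n k X Y p" using assms(1-3) by (simp add: right_fibration_def)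
  then obtain l where "smorph (simplex n) X l" "\<forall>m s. s \<in> scar (horn n k) m \<longrightarrow> l m s = a m s"
    "\<forall>m s. s \<in> scar (simplex n) m \<longrightarrow> p m (l m s) = b m s"
    using assms(4-6) unfolding has_rlp_horn_def by blast
  then show ?thesis using that by blast
qed

lemma prism_filt_Suc_diff_eq:
  assumes "s \<in> prism_filt N (Suc j) m" and "s \<notin> prism_filt N j m"
  shows "\<exists>v\<in>scar (simplex (Suc N)) m. s = prism_simplex j v"
  using prism_simplex_prism_simplex_inv[OF prism_filt_subset prism_filt_Suc_diff] assms by metis

definition prism_filt_extend :: "nat \<Rightarrow> nat \<Rightarrow> 'a prism_map \<Rightarrow> (nat \<Rightarrow> nat list \<Rightarrow> 'a) \<Rightarrow> 'a prism_map" where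
  "prism_filt_extend N j Q l m s = (if s \<in> prism_filt N j m then Q m s else l m (prism_simplex_inv s))"

lemma prism_filt_extend_prism_simplex:
  assumes j: "j \<le> N"
    and l_horn: "\<And>m v. v \<in> scar (horn (Suc N) (Suc j)) m \<Longrightarrow> l m v = Q m (prism_simplex j v)"
    and v: "v \<in> scar (simplex (Suc N)) m"
  shows "prism_filt_extend N j Q l m (prism_simplex j v) = l m v"
  using l_horn prism_simplex_in_prism_filt_iff[OF v j] unfolding prism_filt_extend_def
  by (simp add: prism_simplex_inv_inverse)

lemma smorph_on_prism_filt_extend:
  assumes j: "j \<le> N" and Q: "smorph_on (prism N) (prism_filt N j) X Q"
    and l: "smorph (simplex (Suc N)) X l"
    and l_horn: "\<And>m v. v \<in> scar (horn (Suc N) (Suc j)) m \<Longrightarrow> l m v = Q m (prism_simplex j v)"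
  shows "smorph_on (prism N) (prism_filt N (Suc j)) X (prism_filt_extend N j Q l)"
proof -
  have glue: "prism_filt_extend N j Q l m (prism_simplex j v) = l m v"
    if "v \<in> scar (simplex (Suc N)) m" for m v
    using j l_horn that by (rule prism_filt_extend_prism_simplex)
  show ?thesis
    unfolding smorph_on_def
  proof (intro conjI allI impI)
    fix m s assume s: "s \<in> prism_filt N (Suc j) m"
    show "prism_filt_extend N j Q l m s \<in> scar X m"
    proof (cases "s \<in> prism_filt N j m")
      case True then show ?thesis using smorph_on_closed[OF Q] by (simp add: prism_filt_extend_def)
    next
      case False then show ?thesis using prism_filt_Suc_diff_eq[OF s] glue smorph_closed[OF l] by auto
    qed
  next
    fix m n f s assume f: "simp_op m n f" and s: "s \<in> prism_filt N (Suc j) n"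
    show "prism_filt_extend N j Q l m (sop (prism N) m n f s) = sop X m n f (prism_filt_extend N j Q l n s)"
    proof (cases "s \<in> prism_filt N j n")
      case True
      then show ?thesis
        using prism_filt_sop[OF f] smorph_on_sop[OF Q f] by (simp add: prism_filt_extend_def)
    next
      case False
      then obtain v where v: "v \<in> scar (simplex (Suc N)) n" and sv: "s = prism_simplex j v"
        using prism_filt_Suc_diff_eq[OF s] by blast
      have "prism_filt_extend N j Q l m (sop (prism N) m n f s) = l m (sop (simplex (Suc N)) m n f v)"
        using sv prism_simplex_sop[OF f v] glue[OF simplex_sop_closed[OF f v]] by simp
      also have "\<dots> = sop X m n f (prism_filt_extend N j Q l n s)"
        using smorph_sop[OF l f v] glue[OF v] sv by simp
      finally show ?thesis .
    qed
  qed
qed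

lemma right_fibration_extend_prism_filt:
  assumes rf: "right_fibration X Y p" and j: "j \<le> N"
    and Q: "smorph_on (prism N) (prism_filt N j) X Q"
    and Phi: "smorph (prism N) Y Phi"
    and pQ: "\<And>m s. s \<in> prism_filt N j m \<Longrightarrow> p m (Q m s) = Phi m s"
  obtains Q' where "smorph_on (prism N) (prism_filt N (Suc j)) X Q'"
    and "\<And>m s. s \<in> prism_filt N j m \<Longrightarrow> Q' m s = Q m s"
    and "\<And>m s. s \<in> prism_filt N (Suc j) m \<Longrightarrow> p m (Q' m s) = Phi m s"
proof -
  have a: "smorph (horn (Suc N) (Suc j)) X (\<lambda>m v. Q m (prism_simplex j v))"
    by (rule smorph_on_comp[OF Q]) (use prism_simplex_in_prism_filt_iff j prism_simplex_sop in auto)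
  have b: "smorph (simplex (Suc N)) Y (\<lambda>m v. Phi m (prism_simplex j v))"
    by (rule smorph_on_comp[OF Phi[unfolded smorph_iff_smorph_on]])
      (use prism_simplex_in j prism_simplex_sop in auto)
  have ab: "p m (Q m (prism_simplex j v)) = Phi m (prism_simplex j v)"
    if "v \<in> scar (horn (Suc N) (Suc j)) m" for m v
    using pQ prism_simplex_in_prism_filt_iff j that by simp
  obtain l where l: "smorph (simplex (Suc N)) X l"
    and l_horn: "\<And>m v. v \<in> scar (horn (Suc N) (Suc j)) m \<Longrightarrow> l m v = Q m (prism_simplex j v)"
    and pl: "\<And>m v. v \<in> scar (simplex (Suc N)) m \<Longrightarrow> p m (l m v) = Phi m (prism_simplex j v)"
    by (rule right_fibration_horn_lift[OF rf _ _ a b ab]) (use j in simp_all)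
  have glue: "prism_filt_extend N j Q l m (prism_simplex j v) = l m v"
    if "v \<in> scar (simplex (Suc N)) m" for m v
    using j l_horn that by (rule prism_filt_extend_prism_simplex)
  have "p m (prism_filt_extend N j Q l m s) = Phi m s" if s: "s \<in> prism_filt N (Suc j) m" for m s
  proof (cases "s \<in> prism_filt N j m")
    case True then show ?thesis using pQ by (simp add: prism_filt_extend_def)
  next
    case False
    then show ?thesis
      using prism_filt_Suc_diff_eq[OF s] glue pl by auto
  qed
  then show ?thesis
    using that smorph_on_prism_filt_extend[OF j Q l l_horn] by (simp add: prism_filt_extend_def)
qed

lemma right_fibration_prism_lift:
  assumes rf: "right_fibration X Y p"
    and D: "smorph_on (prism N) (prism_filt N 0) X D"
    and Phi: "smorph (prism N) Y Phi"
    and pD: "\<And>m s. s \<in> prism_filt N 0 m \<Longrightarrow> p m (D m s) = Phi m s"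
  obtains Q where "smorph (prism N) X Q"
    and "\<And>m s. s \<in> prism_filt N 0 m \<Longrightarrow> Q m s = D m s"
    and "\<And>m s. s \<in> scar (prism N) m \<Longrightarrow> p m (Q m s) = Phi m s"
proof -
  have "\<exists>Q. smorph_on (prism N) (prism_filt N j) X Q \<and>
      (\<forall>m s. s \<in> prism_filt N 0 m \<longrightarrow> Q m s = D m s) \<and>
      (\<forall>m s. s \<in> prism_filt N j m \<longrightarrow> p m (Q m s) = Phi m s)" if "j \<le> Suc N" for j
    using that
  proof (induction j)
    case 0 then show ?case using D pD by blast
  next
    case (Suc j)
    then obtain Q where Q: "smorph_on (prism N) (prism_filt N j) X Q"
      "\<forall>m s. s \<in> prism_filt N 0 m \<longrightarrow> Q m s = D m s"
      "\<forall>m s. s \<in> prism_filt N j m \<longrightarrow> p m (Q m s) = Phi m s" by auto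
    obtain Q' where "smorph_on (prism N) (prism_filt N (Suc j)) X Q'"
      "\<And>m s. s \<in> prism_filt N j m \<Longrightarrow> Q' m s = Q m s"
      "\<And>m s. s \<in> prism_filt N (Suc j) m \<Longrightarrow> p m (Q' m s) = Phi m s"
      using right_fibration_extend_prism_filt[OF rf _ Q(1) Phi] Q(3) Suc.prems by auto
    then show ?case using Q(2) prism_filt_mono[of 0 j] by auto
  qed
  then obtain Q where Q: "smorph_on (prism N) (prism_filt N (Suc N)) X Q"
    "\<forall>m s. s \<in> prism_filt N 0 m \<longrightarrow> Q m s = D m s"
    "\<forall>m s. s \<in> prism_filt N (Suc N) m \<longrightarrow> p m (Q m s) = Phi m s" by blast
  have "prism_filt N (Suc N) = scar (prism N)"
    using prism_filt_top prism_filt_subset by blast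
  then show ?thesis using that Q unfolding smorph_iff_smorph_on by (metis (no_types))
qed

section \<open>The path space and the right homotopy fibre\<close>

lemma spullback_scar [simp]:
  "(x, z) \<in> scar (spullback X p Z q) n \<longleftrightarrow> x \<in> scar X n \<and> z \<in> scar Z n \<and> p n x = q n z"
  by (simp add: spullback_def)

lemma spullback_sop [simp]:
  "sop (spullback X p Z q) m n f (x, z) = (sop X m n f x, sop Z m n f z)"
  by (simp add: spullback_def)

lemma is_sset_spullback:
  assumes X: "is_sset X" and Z: "is_sset Z" and p: "smorph X Y p" and q: "smorph Z Y q"
  shows "is_sset (spullback X p Z q)"
  unfolding is_sset_def
proof (intro conjI allI impI; clarify)
  fix m n f x z assume f: "simp_op m n f" and xz: "(x, z) \<in> scar (spullback X p Z q) n"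
  then show "sop (spullback X p Z q) m n f (x, z) \<in> scar (spullback X p Z q) m"
    using sset_closed[OF X f] sset_closed[OF Z f] smorph_sop[OF p f] smorph_sop[OF q f] by simp
next
  fix n x z assume "(x, z) \<in> scar (spullback X p Z q) n"
  then show "sop (spullback X p Z q) n n id (x, z) = (x, z)"
    using sset_id[OF X] sset_id[OF Z] by simp
next
  fix l m n g f x z assume "simp_op l m g" "simp_op m n f" "(x, z) \<in> scar (spullback X p Z q) n"
  then show "sop (spullback X p Z q) l m g (sop (spullback X p Z q) m n f (x, z)) =
      sop (spullback X p Z q) l n (f \<circ> g) (x, z)"
    using sset_comp[OF X] sset_comp[OF Z] by simp
next
  fix m n f f' x z assume "simp_op m n f" "\<forall>i\<le>m. f i = f' i" "(x, z) \<in> scar (spullback X p Z q) n"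
  then show "sop (spullback X p Z q) m n f (x, z) = sop (spullback X p Z q) m n f' (x, z)"
    using sset_cong[OF X, of m n f f'] sset_cong[OF Z, of m n f f'] by simp
qed

lemma fbar_0 [simp]: "fbar f 0 = 0" and fbar_Suc [simp]: "fbar f (Suc i) = Suc (f i)"
  by (simp_all add: fbar_def)

lemma simp_op_fbar: "simp_op m n f \<Longrightarrow> simp_op (Suc m) (Suc n) (fbar f)"
  unfolding simp_op_def fbar_def by auto

lemma path_space_scar:
  "z \<in> scar (path_space Y y) n \<longleftrightarrow> z \<in> scar Y (Suc n) \<and> sop Y 0 (Suc n) (\<lambda>_. 0) z = y"
  by (simp add: path_space_def)

lemma path_space_sop: "sop (path_space Y y) m n f z = sop Y (Suc m) (Suc n) (fbar f) z"
  by (simp add: path_space_def)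

lemma sop_path_space_zero:
  assumes Y: "is_sset Y" and z: "z \<in> scar (path_space Y y) n" and g: "simp_op k (Suc n) g"
    and g0: "\<And>i. i \<le> k \<Longrightarrow> g i = 0"
  shows "sop Y k (Suc n) g z = sop Y k 0 (\<lambda>_. 0) y"
proof -
  have zY: "z \<in> scar Y (Suc n)" and z0: "sop Y 0 (Suc n) (\<lambda>_. 0) z = y"
    using z by (auto simp: path_space_scar)
  have "sop Y k (Suc n) g z = sop Y k (Suc n) (\<lambda>_. 0) z"
    by (rule sset_cong[OF Y g _ zY]) (rule g0)
  also have "\<dots> = sop Y k 0 (\<lambda>_. 0) y"
    using sset_comp[OF Y simp_op_zero[of k 0] simp_op_zero[of 0 "Suc n"] zY] z0
    by (simp add: comp_def)
  finally show ?thesis .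
qed

lemma is_sset_path_space:
  assumes Y: "is_sset Y"
  shows "is_sset (path_space Y y)"
  unfolding is_sset_def path_space_sop
proof (intro conjI allI impI)
  fix m n f z assume f: "simp_op m n f" and z: "z \<in> scar (path_space Y y) n"
  have zY: "z \<in> scar Y (Suc n)" using z by (simp add: path_space_scar)
  have "sop Y 0 (Suc m) (\<lambda>_. 0) (sop Y (Suc m) (Suc n) (fbar f) z) = sop Y 0 (Suc n) (fbar f \<circ> (\<lambda>_. 0)) z"
    using sset_comp[OF Y simp_op_zero simp_op_fbar[OF f] zY] .
  also have "\<dots> = y" using z by (simp add: path_space_scar comp_def)
  finally show "sop Y (Suc m) (Suc n) (fbar f) z \<in> scar (path_space Y y) m"
    using sset_closed[OF Y simp_op_fbar[OF f] zY] by (simp add: path_space_scar)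
next
  fix n z assume "z \<in> scar (path_space Y y) n"
  then show "sop Y (Suc n) (Suc n) (fbar id) z = z"
    using sset_id_on[OF Y simp_op_fbar[OF simp_op_id]] by (simp add: path_space_scar fbar_def)
next
  fix l m n g f z assume g: "simp_op l m g" and f: "simp_op m n f" and z: "z \<in> scar (path_space Y y) n"
  have zY: "z \<in> scar Y (Suc n)" using z by (simp add: path_space_scar)
  have "sop Y (Suc l) (Suc n) (fbar f \<circ> fbar g) z = sop Y (Suc l) (Suc n) (fbar (f \<circ> g)) z"
    using sset_cong[OF Y simp_op_comp[OF simp_op_fbar[OF g] simp_op_fbar[OF f]] _ zY, of "fbar (f \<circ> g)"]
    by (simp add: fbar_def)
  then show "sop Y (Suc l) (Suc m) (fbar g) (sop Y (Suc m) (Suc n) (fbar f) z) =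
      sop Y (Suc l) (Suc n) (fbar (f \<circ> g)) z"
    using sset_comp[OF Y simp_op_fbar[OF g] simp_op_fbar[OF f] zY] by simp
next
  fix m n f f' z assume f: "simp_op m n f" and ff: "\<forall>i\<le>m. f i = f' i" and z: "z \<in> scar (path_space Y y) n"
  then show "sop Y (Suc m) (Suc n) (fbar f) z = sop Y (Suc m) (Suc n) (fbar f') z"
    using sset_cong[OF Y simp_op_fbar[OF f], of "fbar f'"] by (simp add: path_space_scar fbar_def)
qed

lemma jbar_closed: "is_sset Y \<Longrightarrow> z \<in> scar Y (Suc n) \<Longrightarrow> jbar Y n z \<in> scar Y n"
  unfolding jbar_def by (rule sset_closed) (auto simp: simp_op_Suc)

lemma jbar_sop:
  assumes Y: "is_sset Y" and f: "simp_op m n f" and z: "z \<in> scar Y (Suc n)"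
  shows "jbar Y m (sop Y (Suc m) (Suc n) (fbar f) z) = sop Y m n f (jbar Y n z)"
proof -
  have "jbar Y m (sop Y (Suc m) (Suc n) (fbar f) z) = sop Y m (Suc n) (fbar f \<circ> Suc) z"
    unfolding jbar_def using sset_comp[OF Y simp_op_Suc simp_op_fbar[OF f] z] .
  also have "\<dots> = sop Y m (Suc n) (Suc \<circ> f) z"
    using sset_cong[OF Y simp_op_comp[OF simp_op_Suc simp_op_fbar[OF f]] _ z, of "Suc \<circ> f"] by simp
  also have "\<dots> = sop Y m n f (jbar Y n z)"
    unfolding jbar_def using sset_comp[OF Y f simp_op_Suc z] by simp
  finally show ?thesis .
qed

lemma smorph_jbar: "is_sset Y \<Longrightarrow> smorph (path_space Y y) Y (jbar Y)"
  unfolding smorph_def using jbar_closed jbar_sop by (auto simp: path_space_scar path_space_sop)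

text \<open>Precomposing paths with contract_op t contracts P(Y,y) onto its base vertex: for t
  constantly 1 it is the identity, for t constantly 0 it is constant at the vertex 0.\<close>

definition contract_op :: "nat list \<Rightarrow> nat \<Rightarrow> nat" where
  "contract_op t k = (if k = 0 then 0 else if t ! (k - 1) = 0 then 0 else k)"

lemma simp_op_contract_op:
  assumes t: "t \<in> scar (simplex 1) m"
  shows "simp_op (Suc m) (Suc m) (contract_op t)"
  unfolding simp_op_def
proof (intro conjI allI impI)
  fix i j assume ij: "i \<le> j" "j \<le> Suc m"
  show "contract_op t i \<le> contract_op t j"
  proof (cases "contract_op t i = 0")
    case False
    then have "i \<noteq> 0" "t ! (i - 1) \<noteq> 0" by (auto simp: contract_op_def split: if_splits)
    moreover have "t ! (i - 1) \<le> t ! (j - 1)" using t ij \<open>i \<noteq> 0\<close> by (auto intro!: sorted_nth_mono)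
    ultimately show ?thesis using ij by (simp add: contract_op_def)
  qed simp
qed (simp add: contract_op_def)

lemma contract_op_sop:
  assumes i: "i \<le> Suc m'"
  shows "fbar f (contract_op (sop (simplex 1) m' m f t) i) = contract_op t (fbar f i)"
  using i by (cases i) (auto simp: contract_op_def)

type_synonym ('a, 'b) hofib_homotopy = "nat \<Rightarrow> ('a \<times> 'b) \<times> nat list \<Rightarrow> 'a"

locale pointed_right_fibration =
  fixes X :: "'a sset" and Y :: "'b sset" and p :: "nat \<Rightarrow> 'a \<Rightarrow> 'b" and y :: 'b
  assumes X: "is_sset X" and Y: "is_sset Y" and rfib: "right_fibration X Y p"
    and y: "y \<in> scar Y 0"
begin

abbreviation PY :: "'b sset" where "PY \<equiv> path_space Y y"

abbreviation Pp :: "('a \<times> 'b) sset" where "Pp \<equiv> right_hofib X Y p y"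

lemma Pp_scar: "(x, z) \<in> scar Pp n \<longleftrightarrow> x \<in> scar X n \<and> z \<in> scar PY n \<and> p n x = jbar Y n z"
  by (simp add: right_hofib_def)

lemma Pp_sop: "sop Pp m n f c = (sop X m n f (fst c), sop PY m n f (snd c))"
  by (cases c) (simp add: right_hofib_def)

lemma Pp_fst: "c \<in> scar Pp n \<Longrightarrow> fst c \<in> scar X n"
  by (cases c) (simp add: Pp_scar)

lemma Pp_snd: "c \<in> scar Pp n \<Longrightarrow> snd c \<in> scar PY n"
  by (cases c) (simp add: Pp_scar)

lemma Pp_lifts: "c \<in> scar Pp n \<Longrightarrow> p n (fst c) = jbar Y n (snd c)"
  by (cases c) (simp add: Pp_scar)

lemma is_sset_Pp: "is_sset Pp"
  unfolding right_hofib_def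
  using is_sset_spullback[OF X is_sset_path_space[OF Y] right_fibration_smorph[OF rfib] smorph_jbar[OF Y]] .

definition base :: "nat \<Rightarrow> 'b" where
  "base m = sop Y (Suc m) 0 (\<lambda>_. 0) y"

lemma sop_base: "simp_op k (Suc m) g \<Longrightarrow> sop Y k (Suc m) g (base m) = sop Y k 0 (\<lambda>_. 0) y"
  unfolding base_def using sset_comp[OF Y _ simp_op_zero y] by (simp add: comp_def)

lemma base_in_PY: "base m \<in> scar PY m"
  using sop_base[OF simp_op_zero] sset_id_on[OF Y simp_op_zero _ y] sset_closed[OF Y simp_op_zero y]
  by (simp add: path_space_scar base_def)

lemma PY_sop_base: "simp_op m n f \<Longrightarrow> sop PY m n f (base n) = base m"
  unfolding path_space_sop using sop_base[OF simp_op_fbar] by (simp add: base_def)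

lemma jbar_base: "jbar Y n (base n) = sop Y n 0 (\<lambda>_. 0) y"
  unfolding jbar_def using sop_base[OF simp_op_Suc] .

text \<open>A simplex c of Pp lies in the image of the fibre iff snd c is the base simplex.\<close>

lemma Pp_sop_over_base: "simp_op m n f \<Longrightarrow> snd c = base n \<Longrightarrow> snd (sop Pp m n f c) = base m"
  by (simp add: Pp_sop PY_sop_base)

lemma Pp_over_base_surj_op:
  assumes g: "surj_op m k g" and b: "b \<in> scar Pp k" and over: "snd (sop Pp m k g b) = base m"
  shows "snd b = base k"
proof -
  note sec = surj_section[OF g le0]
  have "b = sop Pp k k (g \<circ> surj_section g 0) b"
    using sset_id_on[OF is_sset_Pp simp_op_comp[OF sec(1) surj_op_simp_op[OF g]] _ b] sec(2) by simp
  also have "\<dots> = sop Pp k m (surj_section g 0) (sop Pp m k g b)"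
    using sset_comp[OF is_sset_Pp sec(1) surj_op_simp_op[OF g] b] by simp
  finally show ?thesis using Pp_sop_over_base[OF sec(1) over] by simp
qed

definition path_homotopy :: "nat \<Rightarrow> 'b \<Rightarrow> nat list \<Rightarrow> 'b" where
  "path_homotopy m z t = sop Y (Suc m) (Suc m) (contract_op t) z"

definition base_homotopy :: "nat \<Rightarrow> 'b \<Rightarrow> nat list \<Rightarrow> 'b" where
  "base_homotopy m z t = jbar Y m (path_homotopy m z t)"

lemma path_homotopy_in:
  assumes z: "z \<in> scar PY m" and t: "t \<in> scar (simplex 1) m"
  shows "path_homotopy m z t \<in> scar PY m"
proof -
  have zY: "z \<in> scar Y (Suc m)" using z by (simp add: path_space_scar)
  have "sop Y 0 (Suc m) (\<lambda>_. 0) (path_homotopy m z t) = sop Y 0 (Suc m) (contract_op t \<circ> (\<lambda>_. 0)) z"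
    unfolding path_homotopy_def using sset_comp[OF Y simp_op_zero simp_op_contract_op[OF t] zY] .
  also have "\<dots> = y" using z by (simp add: path_space_scar contract_op_def comp_def)
  finally show ?thesis
    using sset_closed[OF Y simp_op_contract_op[OF t] zY] unfolding path_space_scar path_homotopy_def by simp
qed

lemma base_homotopy_in:
  "z \<in> scar PY m \<Longrightarrow> t \<in> scar (simplex 1) m \<Longrightarrow> base_homotopy m z t \<in> scar Y m"
  unfolding base_homotopy_def using path_homotopy_in jbar_closed[OF Y] by (simp add: path_space_scar)

lemma path_homotopy_sop:
  assumes f: "simp_op m' m f" and z: "z \<in> scar PY m" and t: "t \<in> scar (simplex 1) m"
  shows "path_homotopy m' (sop PY m' m f z) (sop (simplex 1) m' m f t) = sop PY m' m f (path_homotopy m z t)"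
proof -
  let ?t = "sop (simplex 1) m' m f t"
  have t': "?t \<in> scar (simplex 1) m'" using simplex_sop_closed[OF f t] .
  have zY: "z \<in> scar Y (Suc m)" using z by (simp add: path_space_scar)
  have "path_homotopy m' (sop PY m' m f z) ?t = sop Y (Suc m') (Suc m) (fbar f \<circ> contract_op ?t) z"
    unfolding path_homotopy_def path_space_sop
    using sset_comp[OF Y simp_op_contract_op[OF t'] simp_op_fbar[OF f] zY] .
  also have "\<dots> = sop Y (Suc m') (Suc m) (contract_op t \<circ> fbar f) z"
    using sset_cong[OF Y simp_op_comp[OF simp_op_contract_op[OF t'] simp_op_fbar[OF f]] _ zY,
        of "contract_op t \<circ> fbar f"] contract_op_sop by simp
  also have "\<dots> = sop PY m' m f (path_homotopy m z t)"
    unfolding path_homotopy_def path_space_sop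
    using sset_comp[OF Y simp_op_fbar[OF f] simp_op_contract_op[OF t] zY] by simp
  finally show ?thesis .
qed

lemma base_homotopy_sop:
  assumes f: "simp_op m' m f" and z: "z \<in> scar PY m" and t: "t \<in> scar (simplex 1) m"
  shows "base_homotopy m' (sop PY m' m f z) (sop (simplex 1) m' m f t) = sop Y m' m f (base_homotopy m z t)"
proof -
  have "base_homotopy m' (sop PY m' m f z) (sop (simplex 1) m' m f t) =
      jbar Y m' (sop PY m' m f (path_homotopy m z t))"
    by (simp only: base_homotopy_def path_homotopy_sop[OF f z t])
  also have "\<dots> = sop Y m' m f (base_homotopy m z t)"
    unfolding base_homotopy_def path_space_sop
    using jbar_sop[OF Y f] path_homotopy_in[OF z t] by (simp add: path_space_scar)
  finally show ?thesis .
qed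

lemma path_homotopy_ones:
  assumes z: "z \<in> scar PY m" and t: "t \<in> scar (simplex 1) m" "set t \<subseteq> {1}"
  shows "path_homotopy m z t = z"
proof -
  have "t ! k = 1" if "k \<le> m" for k
  proof -
    have "t ! k \<in> set t" using t(1) that by (intro nth_mem) simp
    then show ?thesis using t(2) by auto
  qed
  then have "contract_op t i = i" if "i \<le> Suc m" for i
    using that by (cases i) (auto simp: contract_op_def)
  then show ?thesis
    unfolding path_homotopy_def using sset_id_on[OF Y simp_op_contract_op[OF t(1)]] z
    by (simp add: path_space_scar)
qed

lemma path_homotopy_zeros:
  assumes z: "z \<in> scar PY m"
  shows "path_homotopy m z (replicate (Suc m) 0) = base m"
  unfolding path_homotopy_def base_def
  by (rule sop_path_space_zero[OF Y z simp_op_contract_op])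
    (auto simp: contract_op_def nth_replicate simp del: replicate_Suc)

lemma path_homotopy_base:
  "t \<in> scar (simplex 1) m \<Longrightarrow> path_homotopy m (base m) t = base m"
  unfolding path_homotopy_def using sop_base[OF simp_op_contract_op] by (simp add: base_def)

section \<open>Lifting the contraction by skeletal induction\<close>

text \<open>Given lifts H over the simplices of lower dimension, the data of a lift over the
  prism of an n-simplex b on the subcomplex prism_filt n 0: on \<Delta>[n] \<times> {1} it is b itself,
  on the boundary it is H.\<close>

definition prism_lift_data :: "('a, 'b) hofib_homotopy \<Rightarrow> nat \<Rightarrow> 'a \<times> 'b \<Rightarrow> 'a prism_map" where
  "prism_lift_data H n b m s =
    (if {..n} \<subseteq> set (fst s) then fst (sop Pp m n (nth (fst s)) b)
     else H m (sop Pp m n (nth (fst s)) b, snd s))"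

definition prism_lift_target :: "nat \<Rightarrow> 'a \<times> 'b \<Rightarrow> 'b prism_map" where
  "prism_lift_target n b m s = base_homotopy m (snd (sop Pp m n (nth (fst s)) b)) (snd s)"

definition is_prism_lift :: "('a, 'b) hofib_homotopy \<Rightarrow> nat \<Rightarrow> 'a \<times> 'b \<Rightarrow> 'a prism_map \<Rightarrow> bool" where
  "is_prism_lift H n b Q \<longleftrightarrow> smorph (prism n) X Q \<and>
     (\<forall>m s. s \<in> prism_filt n 0 m \<longrightarrow> Q m s = prism_lift_data H n b m s) \<and>
     (\<forall>m s. s \<in> scar (prism n) m \<longrightarrow> p m (Q m s) = prism_lift_target n b m s) \<and>
     (snd b = base n \<longrightarrow> (\<forall>m s. s \<in> scar (prism n) m \<longrightarrow> Q m s = fst (sop Pp m n (nth (fst s)) b)))"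

definition ez_extend :: "(nat \<Rightarrow> 'a \<times> 'b \<Rightarrow> 'a prism_map) \<Rightarrow> ('a, 'b) hofib_homotopy" where
  "ez_extend T m ct = (case ez Pp m (fst ct) of (k, g, b) \<Rightarrow> T k b m (map g [0..<Suc m], snd ct))"

text \<open>Skeletal induction: lift_table n holds the chosen prism lifts over the nondegenerate
  simplices of dimension below n. The choice over an n-simplex only consults simplices of
  lower dimension, where ez_extend (lift_table n) agrees with the final lift hlift.\<close>

primrec lift_table :: "nat \<Rightarrow> nat \<Rightarrow> 'a \<times> 'b \<Rightarrow> 'a prism_map" where
  "lift_table 0 = (\<lambda>_ _ _ _. undefined)"
| "lift_table (Suc n) = (lift_table n)(n := (\<lambda>b. SOME Q. is_prism_lift (ez_extend (lift_table n)) n b Q))"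

definition prism_lift :: "nat \<Rightarrow> 'a \<times> 'b \<Rightarrow> 'a prism_map" where
  "prism_lift k = lift_table (Suc k) k"

definition hlift :: "('a, 'b) hofib_homotopy" where
  "hlift = ez_extend prism_lift"

lemma lift_table_eq_prism_lift: "k < n \<Longrightarrow> lift_table n k = prism_lift k"
  by (induction n) (auto simp: prism_lift_def less_Suc_eq)

lemma ez_extend_lift_table:
  "fst (ez Pp m c) < n \<Longrightarrow> ez_extend (lift_table n) m (c, t) = hlift m (c, t)"
  using lift_table_eq_prism_lift unfolding hlift_def ez_extend_def by (auto split: prod.splits)

lemma Pp_sop_nth_in: "b \<in> scar Pp n \<Longrightarrow> u \<in> scar (simplex n) m \<Longrightarrow> sop Pp m n (nth u) b \<in> scar Pp m"
  using sset_closed[OF is_sset_Pp simp_op_nth] by blast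

lemma ez_dim_less_face:
  assumes b: "b \<in> scar Pp n" and u: "u \<in> scar (simplex n) m" and nonsurj: "\<not> {..n} \<subseteq> set u"
  shows "fst (ez Pp m (sop Pp m n (nth u) b)) < n"
  using ez_dim_less_nonsurj[OF is_sset_Pp simp_op_nth[OF u] b] surj_op_nth_iff[OF u] nonsurj
    simp_op_nth[OF u] by (simp add: surj_op_def)

lemma prism_lift_data_lift_table:
  assumes b: "b \<in> scar Pp n" and s: "s \<in> scar (prism n) m"
  shows "prism_lift_data (ez_extend (lift_table n)) n b m s = prism_lift_data hlift n b m s"
  using ez_dim_less_face[OF b] ez_extend_lift_table s unfolding prism_lift_data_def
  by (cases s) auto

lemma prism_lift_spec:
  assumes b: "b \<in> scar Pp n" and ex: "\<exists>Q. is_prism_lift hlift n b Q"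
  shows "is_prism_lift hlift n b (prism_lift n b)"
proof -
  have "is_prism_lift (ez_extend (lift_table n)) n b Q \<longleftrightarrow> is_prism_lift hlift n b Q" for Q
    unfolding is_prism_lift_def using prism_lift_data_lift_table[OF b] prism_filt_subset by metis
  then have "is_prism_lift (ez_extend (lift_table n)) n b = is_prism_lift hlift n b"
    by (simp add: fun_eq_iff)
  then show ?thesis
    using someI_ex[OF ex] unfolding prism_lift_def by simp
qed

definition prism_lifts_below :: "nat \<Rightarrow> bool" where
  "prism_lifts_below n \<longleftrightarrow> (\<forall>k<n. \<forall>b. nondeg Pp k b \<longrightarrow> is_prism_lift hlift k b (prism_lift k b))"

lemma ez_as_list:
  assumes c: "c \<in> scar Pp m" and e: "ez Pp m c = (k, g, b)"
  shows "map g [0..<Suc m] \<in> scar (simplex k) m" and "{..k} \<subseteq> set (map g [0..<Suc m])"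
    and "sop Pp m k (nth (map g [0..<Suc m])) b = c"
    and "hlift m (c, t) = prism_lift k b m (map g [0..<Suc m], t)"
proof -
  note s = ez_spec[OF is_sset_Pp c e]
  have g: "simp_op m k g" using s(1) by (rule surj_op_simp_op)
  show "map g [0..<Suc m] \<in> scar (simplex k) m"
    using g by (auto simp: sorted_iff_nth_mono simp_op_def less_Suc_eq_le)
  show "{..k} \<subseteq> set (map g [0..<Suc m])"
    using s(1) by (force simp: surj_op_def less_Suc_eq_le)
  have "sop Pp m k (nth (map g [0..<Suc m])) b = sop Pp m k g b"
    using sset_cong[OF is_sset_Pp g _ nondeg_in[OF s(2)], of "nth (map g [0..<Suc m])"]
    by (simp add: less_Suc_eq_le)
  then show "sop Pp m k (nth (map g [0..<Suc m])) b = c" using s(3) by simp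
  show "hlift m (c, t) = prism_lift k b m (map g [0..<Suc m], t)"
    using e by (simp add: hlift_def ez_extend_def)
qed

lemma hlift_below:
  assumes below: "prism_lifts_below n" and c: "c \<in> scar Pp m" and dim: "fst (ez Pp m c) < n"
    and t: "t \<in> scar (simplex 1) m"
  shows "hlift m (c, t) \<in> scar X m" and "p m (hlift m (c, t)) = base_homotopy m (snd c) t"
    and "set t \<subseteq> {1} \<Longrightarrow> hlift m (c, t) = fst c"
    and "snd c = base m \<Longrightarrow> hlift m (c, t) = fst c"
proof -
  obtain k g b where e: "ez Pp m c = (k, g, b)" by (metis prod_cases3)
  note L = ez_as_list[OF c e] and s = ez_spec[OF is_sset_Pp c e]
  define u where "u = map g [0..<Suc m]"
  have "k < n" using dim e by simp
  then have "is_prism_lift hlift k b (prism_lift k b)"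
    using below s(2) unfolding prism_lifts_below_def by blast
  then have Q: "smorph (prism k) X (prism_lift k b)"
    and Q_data: "\<And>m s. s \<in> prism_filt k 0 m \<Longrightarrow> prism_lift k b m s = prism_lift_data hlift k b m s"
    and Q_lifts: "\<And>m s. s \<in> scar (prism k) m \<Longrightarrow> p m (prism_lift k b m s) = prism_lift_target k b m s"
    and Q_fibre: "snd b = base k \<Longrightarrow> s \<in> scar (prism k) m \<Longrightarrow> prism_lift k b m s = fst (sop Pp m k (nth (fst s)) b)"
    for s
    unfolding is_prism_lift_def by blast+
  have us: "{..k} \<subseteq> set u" and uc: "sop Pp m k (nth u) b = c" and Hu: "hlift m (c, t) = prism_lift k b m (u, t)"
    using L unfolding u_def by auto
  have pr: "(u, t) \<in> scar (prism k) m" using L(1) t u_def by simp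
  show "hlift m (c, t) \<in> scar X m" using Hu smorph_closed[OF Q pr] by simp
  show "p m (hlift m (c, t)) = base_homotopy m (snd c) t"
    using Hu Q_lifts[OF pr] uc by (simp add: prism_lift_target_def)
  show "hlift m (c, t) = fst c" if "set t \<subseteq> {1}"
  proof -
    have "(u, t) \<in> prism_filt k 0 m" using pr that by (simp add: prism_filt_def)
    then show ?thesis using Q_data Hu us uc by (simp add: prism_lift_data_def)
  qed
  show "hlift m (c, t) = fst c" if "snd c = base m"
  proof -
    have "snd b = base k" using Pp_over_base_surj_op[OF s(1) nondeg_in[OF s(2)]] s(3) that by simp
    then show ?thesis using Q_fibre pr Hu uc by simp
  qed
qed

lemma hlift_sop_below:
  assumes below: "prism_lifts_below n" and c: "c \<in> scar Pp m" and dim: "fst (ez Pp m c) < n"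
    and t: "t \<in> scar (simplex 1) m" and f: "simp_op m' m f"
  shows "hlift m' (sop Pp m' m f c, sop (simplex 1) m' m f t) = sop X m' m f (hlift m (c, t))"
proof -
  obtain k g b where e: "ez Pp m c = (k, g, b)" by (metis prod_cases3)
  note L = ez_as_list[OF c e] and s = ez_spec[OF is_sset_Pp c e]
  define u where "u = map g [0..<Suc m]"
  have "k < n" using dim e by simp
  then have "is_prism_lift hlift k b (prism_lift k b)"
    using below s(2) unfolding prism_lifts_below_def by blast
  then have Q: "smorph (prism k) X (prism_lift k b)"
    and Q_data: "\<And>m s. s \<in> prism_filt k 0 m \<Longrightarrow> prism_lift k b m s = prism_lift_data hlift k b m s"
    unfolding is_prism_lift_def by blast+
  have u: "u \<in> scar (simplex k) m" and uc: "sop Pp m k (nth u) b = c"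
    and Hu: "hlift m (c, t) = prism_lift k b m (u, t)"
    using L unfolding u_def by auto
  define u' where "u' = sop (simplex k) m' m f u"
  define t' where "t' = sop (simplex 1) m' m f t"
  have u': "u' \<in> scar (simplex k) m'" and t': "t' \<in> scar (simplex 1) m'"
    using simplex_sop_closed[OF f] u t unfolding u'_def t'_def by auto
  have c': "sop Pp m' k (nth u') b = sop Pp m' m f c"
    using sset_sop_nth_comp[OF is_sset_Pp u f nondeg_in[OF s(2)]] uc unfolding u'_def by simp
  have "sop X m' m f (hlift m (c, t)) = prism_lift k b m' (u', t')"
    using Hu smorph_sop[OF Q f, of "(u, t)"] u t unfolding u'_def t'_def by simp
  moreover have "hlift m' (sop Pp m' m f c, t') = prism_lift k b m' (u', t')"
  proof (cases "{..k} \<subseteq> set u'")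
    case True
    obtain k2 g2 b2 where e2: "ez Pp m' (sop Pp m' k (nth u') b) = (k2, g2, b2)"
      by (metis prod_cases3)
    note E = ez_sop_nondeg[OF is_sset_Pp surj_op_nth[OF u' True] s(2) e2]
    have "map g2 [0..<Suc m'] = u'"
      using E(3) u' by (intro nth_equalityI) (auto simp: less_Suc_eq_le)
    then show ?thesis using e2 E c' by (simp add: hlift_def ez_extend_def)
  next
    case False
    then have "(u', t') \<in> prism_filt k 0 m'" using u' t' by (simp add: prism_filt_def)
    then show ?thesis using Q_data False c' by (simp add: prism_lift_data_def)
  qed
  ultimately show ?thesis unfolding t'_def by simp
qed

lemma is_prism_lift_over_base:
  assumes below: "prism_lifts_below n" and b: "b \<in> scar Pp n" and over: "snd b = base n"
  shows "is_prism_lift hlift n b (\<lambda>m s. fst (sop Pp m n (nth (fst s)) b))"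
proof -
  let ?c = "\<lambda>m u. sop Pp m n (nth u) b"
  have c: "?c m u \<in> scar Pp m" and c_over: "snd (?c m u) = base m"
    if "u \<in> scar (simplex n) m" for u m
    using Pp_sop_nth_in[OF b that] Pp_sop_over_base[OF simp_op_nth[OF that] over]
    by auto
  have "smorph (prism n) X (\<lambda>m s. fst (?c m (fst s)))"
    unfolding smorph_def
  proof (intro conjI allI impI; clarify)
    fix m u t assume "(u, t) \<in> scar (prism n) m"
    then show "fst (?c m (fst (u, t))) \<in> scar X m" using Pp_fst c by simp
  next
    fix m' m f u t assume f: "simp_op m' m f" and "(u, t) \<in> scar (prism n) m"
    then show "fst (?c m' (fst (sop (prism n) m' m f (u, t)))) = sop X m' m f (fst (?c m (fst (u, t))))"
      using sset_sop_nth_comp[OF is_sset_Pp _ f b] by (simp add: Pp_sop)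
  qed
  moreover have "fst (?c m (fst s)) = prism_lift_data hlift n b m s" if s: "s \<in> prism_filt n 0 m" for m s
    using hlift_below(4)[OF below c ez_dim_less_face[OF b] _ c_over] prism_filt_subset[OF s]
    unfolding prism_lift_data_def by (cases s) auto
  moreover have "p m (fst (?c m (fst s))) = prism_lift_target n b m s" if "s \<in> scar (prism n) m" for m s
    using Pp_lifts[OF c] c_over path_homotopy_base that
    unfolding prism_lift_target_def base_homotopy_def by (cases s) auto
  ultimately show ?thesis unfolding is_prism_lift_def by blast
qed

lemma prism_lift_data_closed:
  assumes below: "prism_lifts_below n" and b: "b \<in> scar Pp n" and s: "s \<in> prism_filt n 0 m"
  shows "prism_lift_data hlift n b m s \<in> scar X m"
proof -
  obtain u t where st: "s = (u, t)" and u: "u \<in> scar (simplex n) m" and t: "t \<in> scar (simplex 1) m"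
    using prism_filt_subset[OF s] by (cases s) auto
  show ?thesis
    using Pp_fst[OF Pp_sop_nth_in[OF b u]] st
      hlift_below(1)[OF below Pp_sop_nth_in[OF b u] ez_dim_less_face[OF b u] t]
    unfolding prism_lift_data_def by auto
qed

lemma prism_lift_data_sop:
  assumes below: "prism_lifts_below n" and b: "b \<in> scar Pp n" and s: "(u, t) \<in> prism_filt n 0 m"
    and f: "simp_op m' m f"
  shows "prism_lift_data hlift n b m' (sop (prism n) m' m f (u, t)) =
    sop X m' m f (prism_lift_data hlift n b m (u, t))"
proof -
  let ?c = "\<lambda>m u. sop Pp m n (nth u) b"
  note low = ez_dim_less_face[OF b]
  have u: "u \<in> scar (simplex n) m" and t: "t \<in> scar (simplex 1) m"
    using prism_filt_subset[OF s] by auto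
  define u' where "u' = sop (simplex n) m' m f u"
  define t' where "t' = sop (simplex 1) m' m f t"
  have u': "u' \<in> scar (simplex n) m'" and t': "t' \<in> scar (simplex 1) m'"
    using simplex_sop_closed[OF f] u t unfolding u'_def t'_def by auto
  have c': "?c m' u' = sop Pp m' m f (?c m u)"
    using sset_sop_nth_comp[OF is_sset_Pp u f b] unfolding u'_def by simp
  have "prism_lift_data hlift n b m' (u', t') = sop X m' m f (prism_lift_data hlift n b m (u, t))"
  proof (cases "{..n} \<subseteq> set u'")
    case True
    then have "{..n} \<subseteq> set u" using set_simplex_sop_subset[OF f, of u] u unfolding u'_def by auto
    then show ?thesis unfolding prism_lift_data_def using True c' by (simp add: Pp_sop)
  next
    case u'_nonsurj: False
    show ?thesis
    proof (cases "{..n} \<subseteq> set u")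
      case True
      then have "set t \<subseteq> {1}" using s by (simp add: prism_filt_def)
      then have "set t' \<subseteq> {1}" using set_simplex_sop_subset[OF f, of t] t unfolding t'_def by auto
      then have "hlift m' (?c m' u', t') = fst (?c m' u')"
        using hlift_below(3)[OF below Pp_sop_nth_in[OF b u'] low[OF u' u'_nonsurj] t'] by simp
      then show ?thesis unfolding prism_lift_data_def using True u'_nonsurj c' by (simp add: Pp_sop)
    next
      case False
      then show ?thesis
        unfolding prism_lift_data_def t'_def
        using u'_nonsurj c' hlift_sop_below[OF below Pp_sop_nth_in[OF b u] low[OF u False] t f] by simp
    qed
  qed
  then show ?thesis unfolding u'_def t'_def by simp
qed

lemma smorph_on_prism_lift_data:
  assumes below: "prism_lifts_below n" and b: "b \<in> scar Pp n"
  shows "smorph_on (prism n) (prism_filt n 0) X (prism_lift_data hlift n b)"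
  unfolding smorph_on_def
  using prism_lift_data_closed[OF below b] prism_lift_data_sop[OF below b] by auto

lemma smorph_prism_lift_target:
  assumes b: "b \<in> scar Pp n"
  shows "smorph (prism n) Y (prism_lift_target n b)"
  unfolding smorph_def
proof (intro conjI allI impI; clarify)
  fix m u t assume "(u, t) \<in> scar (prism n) m"
  then show "prism_lift_target n b m (u, t) \<in> scar Y m"
    unfolding prism_lift_target_def
    using base_homotopy_in Pp_snd Pp_sop_nth_in[OF b] by simp
next
  fix m' m f u t assume f: "simp_op m' m f" and "(u, t) \<in> scar (prism n) m"
  then have u: "u \<in> scar (simplex n) m" and t: "t \<in> scar (simplex 1) m" by auto
  have c: "sop Pp m n (nth u) b \<in> scar Pp m" using Pp_sop_nth_in[OF b u] .
  show "prism_lift_target n b m' (sop (prism n) m' m f (u, t)) = sop Y m' m f (prism_lift_target n b m (u, t))"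
    unfolding prism_lift_target_def
    using sset_sop_nth_comp[OF is_sset_Pp u f b] base_homotopy_sop[OF f Pp_snd[OF c] t]
    by (simp add: Pp_sop)
qed

lemma prism_lift_data_lifts:
  assumes below: "prism_lifts_below n" and b: "b \<in> scar Pp n" and s: "s \<in> prism_filt n 0 m"
  shows "p m (prism_lift_data hlift n b m s) = prism_lift_target n b m s"
proof -
  obtain u t where st: "s = (u, t)" and u: "u \<in> scar (simplex n) m" and t: "t \<in> scar (simplex 1) m"
    using prism_filt_subset[OF s] by (cases s) auto
  have c: "sop Pp m n (nth u) b \<in> scar Pp m" using Pp_sop_nth_in[OF b u] .
  show ?thesis
  proof (cases "{..n} \<subseteq> set u")
    case True
    then have "set t \<subseteq> {1}" using s st by (simp add: prism_filt_def)
    then show ?thesis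
      unfolding prism_lift_data_def prism_lift_target_def base_homotopy_def st
      using True Pp_lifts[OF c] path_homotopy_ones[OF Pp_snd[OF c] t] by simp
  next
    case False
    then show ?thesis
      unfolding prism_lift_data_def prism_lift_target_def st
      using hlift_below(2)[OF below c ez_dim_less_face[OF b u False] t] by simp
  qed
qed

lemma exists_prism_lift:
  assumes below: "prism_lifts_below n" and b: "b \<in> scar Pp n"
  shows "\<exists>Q. is_prism_lift hlift n b Q"
proof (cases "snd b = base n")
  case True
  then show ?thesis using is_prism_lift_over_base[OF below b] by blast
next
  case False
  show ?thesis
  proof (rule right_fibration_prism_lift[OF rfib smorph_on_prism_lift_data[OF below b]
        smorph_prism_lift_target[OF b] prism_lift_data_lifts[OF below b]])
    fix Q assume "smorph (prism n) X Q"
      and "\<And>m s. s \<in> prism_filt n 0 m \<Longrightarrow> Q m s = prism_lift_data hlift n b m s"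
      and "\<And>m s. s \<in> scar (prism n) m \<Longrightarrow> p m (Q m s) = prism_lift_target n b m s"
    then have "is_prism_lift hlift n b Q" using False unfolding is_prism_lift_def by blast
    then show ?thesis by blast
  qed
qed

lemma prism_lifts_below: "prism_lifts_below n"
proof (induction n)
  case 0 then show ?case by (simp add: prism_lifts_below_def)
next
  case (Suc n)
  then show ?case
    using prism_lift_spec[OF nondeg_in exists_prism_lift[OF Suc.IH nondeg_in]]
    unfolding prism_lifts_below_def by (auto simp: less_Suc_eq)
qed

lemma ez_dim_less_Suc: "c \<in> scar Pp m \<Longrightarrow> fst (ez Pp m c) < Suc m"
  using ez_dim_le[OF is_sset_Pp] by (simp add: less_Suc_eq_le)

lemma hlift_closed: "c \<in> scar Pp m \<Longrightarrow> t \<in> scar (simplex 1) m \<Longrightarrow> hlift m (c, t) \<in> scar X m"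
  using hlift_below(1)[OF prism_lifts_below _ ez_dim_less_Suc] by blast

lemma hlift_lifts:
  "c \<in> scar Pp m \<Longrightarrow> t \<in> scar (simplex 1) m \<Longrightarrow> p m (hlift m (c, t)) = base_homotopy m (snd c) t"
  using hlift_below(2)[OF prism_lifts_below _ ez_dim_less_Suc] by blast

lemma hlift_at_one:
  "c \<in> scar Pp m \<Longrightarrow> t \<in> scar (simplex 1) m \<Longrightarrow> set t \<subseteq> {1} \<Longrightarrow> hlift m (c, t) = fst c"
  using hlift_below(3)[OF prism_lifts_below _ ez_dim_less_Suc] by blast

lemma hlift_over_base:
  "c \<in> scar Pp m \<Longrightarrow> t \<in> scar (simplex 1) m \<Longrightarrow> snd c = base m \<Longrightarrow> hlift m (c, t) = fst c"
  using hlift_below(4)[OF prism_lifts_below _ ez_dim_less_Suc] by blast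

lemma hlift_sop:
  "c \<in> scar Pp m \<Longrightarrow> t \<in> scar (simplex 1) m \<Longrightarrow> simp_op m' m f \<Longrightarrow>
    hlift m' (sop Pp m' m f c, sop (simplex 1) m' m f t) = sop X m' m f (hlift m (c, t))"
  using hlift_sop_below[OF prism_lifts_below _ ez_dim_less_Suc] by blast

section \<open>The deformation retraction\<close>

abbreviation Fib :: "('a \<times> nat list) sset" where "Fib \<equiv> sfibre X Y p y"

lemma Fib_scar:
  "(x, d) \<in> scar Fib n \<longleftrightarrow> x \<in> scar X n \<and> d \<in> scar (simplex 0) n \<and> p n x = sop Y n 0 (\<lambda>_. 0) y"
  by (simp add: sfibre_def vertex_map_def)

lemma Fib_sop: "sop Fib m n f (x, d) = (sop X m n f x, sop (simplex 0) m n f d)"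
  by (simp add: sfibre_def del: simplex_sop)

lemma Fib_snd:
  assumes "a \<in> scar Fib n"
  shows "snd a = replicate (Suc n) 0"
proof (cases a)
  case (Pair x d)
  then have "d \<in> scar (simplex 0) n" using assms Fib_scar by blast
  with Pair show ?thesis using simplex_0_eq_replicate by simp
qed

lemma fibre_to_hofib_eq: "fibre_to_hofib Y y n (x, d) = (x, base n)"
  by (simp add: fibre_to_hofib_def base_map_def base_def)

lemma fibre_to_hofib_in: "a \<in> scar Fib n \<Longrightarrow> fibre_to_hofib Y y n a \<in> scar Pp n"
  using base_in_PY jbar_base by (cases a) (simp add: Fib_scar fibre_to_hofib_eq Pp_scar)

lemma smorph_fibre_to_hofib: "smorph Fib Pp (fibre_to_hofib Y y)"
  unfolding smorph_def
  using fibre_to_hofib_in by (auto simp: Fib_sop fibre_to_hofib_eq Pp_sop PY_sop_base)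

lemma inj_on_fibre_to_hofib: "inj_on (fibre_to_hofib Y y n) (scar Fib n)"
proof (rule inj_onI)
  fix a a' assume "a \<in> scar Fib n" "a' \<in> scar Fib n" "fibre_to_hofib Y y n a = fibre_to_hofib Y y n a'"
  then show "a = a'"
    using Fib_snd[of a n] Fib_snd[of a' n] by (cases a, cases a') (simp add: fibre_to_hofib_eq)
qed

definition retraction :: "nat \<Rightarrow> 'a \<times> 'b \<Rightarrow> 'a \<times> nat list" where
  "retraction n c = (hlift n (c, replicate (Suc n) 0), replicate (Suc n) 0)"

definition homotopy :: "nat \<Rightarrow> ('a \<times> 'b) \<times> nat list \<Rightarrow> 'a \<times> 'b" where
  "homotopy n ct = (hlift n ct, path_homotopy n (snd (fst ct)) (snd ct))"

lemma retraction_in: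
  assumes c: "c \<in> scar Pp n"
  shows "retraction n c \<in> scar Fib n"
proof -
  have "p n (hlift n (c, replicate (Suc n) 0)) = sop Y n 0 (\<lambda>_. 0) y"
    using hlift_lifts[OF c replicate_in_simplex] path_homotopy_zeros[OF Pp_snd[OF c]] jbar_base
    by (simp add: base_homotopy_def)
  then show ?thesis
    using hlift_closed[OF c replicate_in_simplex] replicate_in_simplex[of 0 0 n]
    unfolding retraction_def Fib_scar by simp
qed

lemma smorph_retraction: "smorph Pp Fib retraction"
  unfolding smorph_def
  using retraction_in hlift_sop[OF _ replicate_in_simplex] simplex_sop_replicate
  by (auto simp: retraction_def Fib_sop)

lemma retraction_fibre_to_hofib:
  assumes a: "a \<in> scar Fib n"
  shows "retraction n (fibre_to_hofib Y y n a) = a"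
  using hlift_over_base[OF fibre_to_hofib_in[OF a] replicate_in_simplex] Fib_snd[OF a]
  by (cases a) (simp add: retraction_def fibre_to_hofib_eq)

lemma smorph_homotopy: "smorph (sprod_interval Pp) Pp homotopy"
  unfolding smorph_def
proof (intro conjI allI impI; clarify)
  fix n c t assume "(c, t) \<in> scar (sprod_interval Pp) n"
  then have c: "c \<in> scar Pp n" and t: "t \<in> scar (simplex 1) n" by (auto simp: sprod_interval_def)
  show "homotopy n (c, t) \<in> scar Pp n"
    using hlift_closed[OF c t] hlift_lifts[OF c t] path_homotopy_in[OF Pp_snd[OF c] t]
    by (cases c) (simp add: homotopy_def Pp_scar base_homotopy_def)
next
  fix m n f c t assume f: "simp_op m n f" and "(c, t) \<in> scar (sprod_interval Pp) n"
  then have c: "c \<in> scar Pp n" and t: "t \<in> scar (simplex 1) n" by (auto simp: sprod_interval_def)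
  have "sop (sprod_interval Pp) m n f (c, t) = (sop Pp m n f c, sop (simplex 1) m n f t)"
    by (simp add: sprod_interval_def del: simplex_sop)
  then show "homotopy m (sop (sprod_interval Pp) m n f (c, t)) = sop Pp m n f (homotopy n (c, t))"
    using hlift_sop[OF c t f] path_homotopy_sop[OF f Pp_snd[OF c] t]
    by (simp add: homotopy_def Pp_sop)
qed

lemma homotopy_at_zero:
  "c \<in> scar Pp n \<Longrightarrow> homotopy n (c, replicate (Suc n) 0) = fibre_to_hofib Y y n (retraction n c)"
  using path_homotopy_zeros[OF Pp_snd] by (simp add: homotopy_def retraction_def fibre_to_hofib_eq)

lemma homotopy_at_one: "c \<in> scar Pp n \<Longrightarrow> homotopy n (c, replicate (Suc n) 1) = c"
  using hlift_at_one[OF _ replicate_in_simplex] path_homotopy_ones[OF Pp_snd replicate_in_simplex]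
  by (simp add: homotopy_def del: replicate_Suc)

lemma homotopy_fibre:
  assumes a: "a \<in> scar Fib n" and t: "t \<in> scar (simplex 1) n"
  shows "homotopy n (fibre_to_hofib Y y n a, t) = fibre_to_hofib Y y n a"
  using hlift_over_base[OF fibre_to_hofib_in[OF a] t] path_homotopy_base[OF t]
  by (cases a) (simp add: homotopy_def fibre_to_hofib_eq)

lemma deformation_retract_incl_fibre: "deformation_retract_incl Fib Pp (fibre_to_hofib Y y)"
  unfolding deformation_retract_incl_def
  using smorph_fibre_to_hofib inj_on_fibre_to_hofib smorph_retraction retraction_fibre_to_hofib
    smorph_homotopy homotopy_at_zero homotopy_at_one homotopy_fibre
  by blast

end

theorem proposition4p12:
  fixes X :: "'a sset" and Y :: "'b sset" and p :: "nat \<Rightarrow> 'a \<Rightarrow> 'b" and y :: 'b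
  assumes "is_sset X" and "is_sset Y"
    and "right_fibration X Y p"
    and "y \<in> scar Y 0"
  shows "deformation_retract_incl (sfibre X Y p y) (right_hofib X Y p y) (fibre_to_hofib Y y)"
proof -
  interpret pointed_right_fibration X Y p y using assms by unfold_locales
  show ?thesis by (rule deformation_retract_incl_fibre)
qed

end
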